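(* Let $Q$ be a finite quiver with $kQ$ of finite GK-dimension, and let $P$ be a point module over $kQ$. Then there is a cyclic vertex $v$ such that $\pi^*P\cong\pi^*\mathcal O_v$ in $\mathrm{QGr}\,kQ$.
   Context: $kQ$ is the path algebra of a finite quiver over a field $k$, graded by path length. A point module is a graded right module $M=\bigoplus_{i\ge0}M_i$ with $M=M_0\,kQ$ and $\dim_kM_i=1$ for all $i\ge0$. $\mathrm{QGr}\,kQ$ is the quotient of graded modules by torsion modules (modules each of whose elements is annihilated by $(kQ)_{\ge n}$ for some $n$), with quotient functor $\pi^*$. With finite GK-dimension each cyclic vertex $v$ lies on a unique simple cycle $p=(v=v_0,a_1,\dots,a_n,v_n=v)$, and $\mathcal O_v=e_vkQ/\bigoplus p^m a_1\cdots a_i b\,kQ$ (sum over $m\ge0$, $0\le i<n$, arrows $b\neq a_{i+1}$ with source $v_i$). *)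

theory Defs
  imports Main "HOL-Library.Extended_Real" "HOL-Library.Liminf_Limsup"
begin

text \<open>Paths are composed left to right: a path starting at v is
a list of arrows a1 ... an with src a1 = v and tgt ai = src a(i+1).
The empty list at v stands for the trivial path e_v.\<close>

fun pathfrom :: "('e \<Rightarrow> 'v) \<Rightarrow> ('e \<Rightarrow> 'v) \<Rightarrow> 'v \<Rightarrow> 'e list \<Rightarrow> bool" where
  "pathfrom src tgt v [] = True"
| "pathfrom src tgt v (a # q) = (src a = v \<and> pathfrom src tgt (tgt a) q)"

fun endv :: "('e \<Rightarrow> 'v) \<Rightarrow> 'v \<Rightarrow> 'e list \<Rightarrow> 'v" where
  "endv tgt v [] = v"
| "endv tgt v (a # q) = endv tgt (tgt a) q"

text \<open>GK-dimension of kQ: kQ is generated by V = kQ_0 + kQ_1 (which contains 1), and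
V^n = (kQ)_{\<le>n} has the paths of length at most n as a basis.
GKdim kQ = limsup_n log(dim V^n)/log n.\<close>

definition gk_dim :: "('e::finite \<Rightarrow> 'v::finite) \<Rightarrow> ('e \<Rightarrow> 'v) \<Rightarrow> ereal" where
  "gk_dim src tgt = limsup (\<lambda>n::nat. ereal
      (ln (real (card {(v, p). pathfrom src tgt v p \<and> length p \<le> n})) / ln (real n)))"

text \<open>Graded right kQ-modules, given by their k-vector space structure together with the
right actions of the generators e_v (idempotents) and arrows of kQ, and the grading
(mgr i is the homogeneous component M_i).\<close>

record ('k, 'v, 'e, 'm) qmod =
  mcarr :: "'m set"
  mzero :: 'm
  madd :: "'m \<Rightarrow> 'm \<Rightarrow> 'm"
  msmul :: "'k \<Rightarrow> 'm \<Rightarrow> 'm"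
  midem :: "'v \<Rightarrow> 'm \<Rightarrow> 'm"
  marr :: "'e \<Rightarrow> 'm \<Rightarrow> 'm"
  mgr :: "nat \<Rightarrow> 'm set"

definition lsum :: "('k, 'v, 'e, 'm, 'z) qmod_scheme \<Rightarrow> ('b \<Rightarrow> 'm) \<Rightarrow> 'b list \<Rightarrow> 'm" where
  "lsum M f xs = foldr (\<lambda>x acc. madd M (f x) acc) xs (mzero M)"

definition msub :: "('k::field, 'v, 'e, 'm, 'z) qmod_scheme \<Rightarrow> 'm \<Rightarrow> 'm \<Rightarrow> 'm" where
  "msub M x y = madd M x (msmul M (-1) y)"

definition grmod :: "('e::finite \<Rightarrow> 'v::finite) \<Rightarrow> ('e \<Rightarrow> 'v)
    \<Rightarrow> ('k::field, 'v, 'e, 'm, 'z) qmod_scheme \<Rightarrow> bool" where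
  "grmod src tgt M \<longleftrightarrow>
     \<comment> \<open>k-vector space\<close>
     mzero M \<in> mcarr M \<and>
     (\<forall>x\<in>mcarr M. \<forall>y\<in>mcarr M. madd M x y \<in> mcarr M) \<and>
     (\<forall>c. \<forall>x\<in>mcarr M. msmul M c x \<in> mcarr M) \<and>
     (\<forall>x\<in>mcarr M. \<forall>y\<in>mcarr M. \<forall>z\<in>mcarr M. madd M (madd M x y) z = madd M x (madd M y z)) \<and>
     (\<forall>x\<in>mcarr M. \<forall>y\<in>mcarr M. madd M x y = madd M y x) \<and>
     (\<forall>x\<in>mcarr M. madd M (mzero M) x = x) \<and>
     (\<forall>x\<in>mcarr M. madd M x (msmul M (-1) x) = mzero M) \<and>
     (\<forall>c. \<forall>x\<in>mcarr M. \<forall>y\<in>mcarr M. msmul M c (madd M x y) = madd M (msmul M c x) (msmul M c y)) \<and>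
     (\<forall>c d. \<forall>x\<in>mcarr M. msmul M (c + d) x = madd M (msmul M c x) (msmul M d x)) \<and>
     (\<forall>c d. \<forall>x\<in>mcarr M. msmul M (c * d) x = msmul M c (msmul M d x)) \<and>
     (\<forall>x\<in>mcarr M. msmul M 1 x = x) \<and>
     \<comment> \<open>the generators of kQ act by k-linear maps\<close>
     (\<forall>v. \<forall>x\<in>mcarr M. midem M v x \<in> mcarr M) \<and>
     (\<forall>a. \<forall>x\<in>mcarr M. marr M a x \<in> mcarr M) \<and>
     (\<forall>v. \<forall>x\<in>mcarr M. \<forall>y\<in>mcarr M. midem M v (madd M x y) = madd M (midem M v x) (midem M v y)) \<and>
     (\<forall>a. \<forall>x\<in>mcarr M. \<forall>y\<in>mcarr M. marr M a (madd M x y) = madd M (marr M a x) (marr M a y)) \<and>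
     (\<forall>v c. \<forall>x\<in>mcarr M. midem M v (msmul M c x) = msmul M c (midem M v x)) \<and>
     (\<forall>a c. \<forall>x\<in>mcarr M. marr M a (msmul M c x) = msmul M c (marr M a x)) \<and>
     \<comment> \<open>defining relations of kQ: e_w e_v = \<delta> e_v, sum of e_v = 1, e_{s a} a = a = a e_{t a}\<close>
     (\<forall>v w. \<forall>x\<in>mcarr M. midem M v (midem M w x) = (if v = w then midem M w x else mzero M)) \<and>
     (\<forall>x\<in>mcarr M. \<forall>xs. set xs = UNIV \<and> distinct xs \<longrightarrow> x = lsum M (\<lambda>v. midem M v x) xs) \<and>
     (\<forall>a. \<forall>x\<in>mcarr M. marr M a (midem M (src a) x) = marr M a x) \<and>
     (\<forall>a. \<forall>x\<in>mcarr M. midem M (tgt a) (marr M a x) = marr M a x) \<and>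
     \<comment> \<open>grading M = \<Oplus>_{i\<ge>0} M_i, with kQ_1 M_i \<subseteq> M_{i+1}\<close>
     (\<forall>i. mgr M i \<subseteq> mcarr M \<and> mzero M \<in> mgr M i) \<and>
     (\<forall>i. \<forall>x\<in>mgr M i. \<forall>y\<in>mgr M i. madd M x y \<in> mgr M i) \<and>
     (\<forall>i c. \<forall>x\<in>mgr M i. msmul M c x \<in> mgr M i) \<and>
     (\<forall>i v. \<forall>x\<in>mgr M i. midem M v x \<in> mgr M i) \<and>
     (\<forall>i a. \<forall>x\<in>mgr M i. marr M a x \<in> mgr M (Suc i)) \<and>
     (\<forall>x\<in>mcarr M. \<exists>N ms. (\<forall>i<N. ms i \<in> mgr M i) \<and> x = lsum M ms [0..<N]) \<and>
     (\<forall>N ms. (\<forall>i<N. ms i \<in> mgr M i) \<and> lsum M ms [0..<N] = mzero M \<longrightarrow> (\<forall>i<N. ms i = mzero M))"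

definition path_act :: "('k, 'v, 'e, 'm, 'z) qmod_scheme \<Rightarrow> 'v \<Rightarrow> 'e list \<Rightarrow> 'm \<Rightarrow> 'm" where
  "path_act M v p x = foldl (\<lambda>y a. marr M a y) (midem M v x) p"

text \<open>x is annihilated by (kQ)_{\<ge>n}, which is spanned by the paths of length \<ge> n.\<close>

definition ann_ge :: "('e \<Rightarrow> 'v) \<Rightarrow> ('e \<Rightarrow> 'v) \<Rightarrow> ('k, 'v, 'e, 'm, 'z) qmod_scheme \<Rightarrow> nat \<Rightarrow> 'm \<Rightarrow> bool" where
  "ann_ge src tgt M n x \<longleftrightarrow>
     (\<forall>v p. pathfrom src tgt v p \<and> n \<le> length p \<longrightarrow> path_act M v p x = mzero M)"

definition tors :: "('e \<Rightarrow> 'v) \<Rightarrow> ('e \<Rightarrow> 'v) \<Rightarrow> ('k, 'v, 'e, 'm, 'z) qmod_scheme \<Rightarrow> 'm set" where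
  "tors src tgt M = {x \<in> mcarr M. \<exists>n. ann_ge src tgt M n x}"

definition gr_submod :: "('k, 'v, 'e, 'm, 'z) qmod_scheme \<Rightarrow> 'm set \<Rightarrow> bool" where
  "gr_submod M S \<longleftrightarrow> S \<subseteq> mcarr M \<and> mzero M \<in> S \<and>
     (\<forall>x\<in>S. \<forall>y\<in>S. madd M x y \<in> S) \<and> (\<forall>c. \<forall>x\<in>S. msmul M c x \<in> S) \<and>
     (\<forall>v. \<forall>x\<in>S. midem M v x \<in> S) \<and> (\<forall>a. \<forall>x\<in>S. marr M a x \<in> S) \<and>
     (\<forall>x\<in>S. \<exists>N ms. (\<forall>i<N. ms i \<in> mgr M i \<inter> S) \<and> x = lsum M ms [0..<N])"

definition quot_torsion :: "('e \<Rightarrow> 'v) \<Rightarrow> ('e \<Rightarrow> 'v) \<Rightarrow> ('k, 'v, 'e, 'm, 'z) qmod_scheme \<Rightarrow> 'm set \<Rightarrow> bool" where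
  "quot_torsion src tgt M S \<longleftrightarrow>
     (\<forall>x\<in>mcarr M. \<exists>n. \<forall>v p. pathfrom src tgt v p \<and> n \<le> length p \<longrightarrow> path_act M v p x \<in> S)"

text \<open>Morphisms \<pi>*M \<rightarrow> \<pi>*N in the Serre quotient are
represented by graded (degree 0) homomorphisms f : M' \<rightarrow> N/\<tau>N with M' \<subseteq> M a graded
submodule such that M/M' is torsion; such a morphism is an isomorphism iff ker f and
coker f are torsion. A map into N/\<tau>N is represented by a map into N taken modulo \<tau>N.\<close>

definition qgr_iso :: "('e::finite \<Rightarrow> 'v::finite) \<Rightarrow> ('e \<Rightarrow> 'v)
    \<Rightarrow> ('k::field, 'v, 'e, 'm, 'z) qmod_scheme \<Rightarrow> ('k, 'v, 'e, 'n, 'w) qmod_scheme \<Rightarrow> bool" where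
  "qgr_iso src tgt M N \<longleftrightarrow>
     (\<exists>S f. gr_submod M S \<and> quot_torsion src tgt M S \<and>
        (\<forall>x\<in>S. f x \<in> mcarr N) \<and>
        (\<forall>x\<in>S. \<forall>y\<in>S. msub N (f (madd M x y)) (madd N (f x) (f y)) \<in> tors src tgt N) \<and>
        (\<forall>c. \<forall>x\<in>S. msub N (f (msmul M c x)) (msmul N c (f x)) \<in> tors src tgt N) \<and>
        (\<forall>v. \<forall>x\<in>S. msub N (f (midem M v x)) (midem N v (f x)) \<in> tors src tgt N) \<and>
        (\<forall>a. \<forall>x\<in>S. msub N (f (marr M a x)) (marr N a (f x)) \<in> tors src tgt N) \<and>
        (\<forall>i. \<forall>x\<in>S \<inter> mgr M i. \<exists>y\<in>mgr N i. msub N (f x) y \<in> tors src tgt N) \<and>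
        (\<forall>x\<in>S. f x \<in> tors src tgt N \<longrightarrow> x \<in> tors src tgt M) \<and>
        (\<forall>y\<in>mcarr N. \<exists>n. \<forall>v p. pathfrom src tgt v p \<and> n \<le> length p \<longrightarrow>
            (\<exists>x\<in>S. msub N (path_act N v p y) (f x) \<in> tors src tgt N)))"

definition point_module :: "('e::finite \<Rightarrow> 'v::finite) \<Rightarrow> ('e \<Rightarrow> 'v)
    \<Rightarrow> ('k::field, 'v, 'e, 'm, 'z) qmod_scheme \<Rightarrow> bool" where
  "point_module src tgt M \<longleftrightarrow> grmod src tgt M \<and>
     (\<forall>x\<in>mcarr M. \<exists>ts. (\<forall>(y, v, p)\<in>set ts. y \<in> mgr M 0 \<and> pathfrom src tgt v p) \<and>
                        x = lsum M (\<lambda>(y, v, p). path_act M v p y) ts) \<and>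
     (\<forall>i. \<exists>x\<in>mgr M i. x \<noteq> mzero M \<and> (\<forall>y\<in>mgr M i. \<exists>c. y = msmul M c x))"

definition simple_cycle :: "('e \<Rightarrow> 'v) \<Rightarrow> ('e \<Rightarrow> 'v) \<Rightarrow> 'v \<Rightarrow> 'e list \<Rightarrow> bool" where
  "simple_cycle src tgt v cyc \<longleftrightarrow> cyc \<noteq> [] \<and> pathfrom src tgt v cyc \<and> endv tgt v cyc = v \<and>
     distinct (map src cyc)"

text \<open>The right module e_v kQ: elements are finitely supported k-linear combinations of
paths starting at v; a path q is right multiplied by an arrow a to q a (or 0).\<close>

definition path_mod :: "('e \<Rightarrow> 'v) \<Rightarrow> ('e \<Rightarrow> 'v) \<Rightarrow> 'v \<Rightarrow> ('k::field, 'v, 'e, 'e list \<Rightarrow> 'k) qmod" where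
  "path_mod src tgt v =
    \<lparr> mcarr = {c. finite {q. c q \<noteq> 0} \<and> (\<forall>q. c q \<noteq> 0 \<longrightarrow> pathfrom src tgt v q)},
      mzero = (\<lambda>q. 0),
      madd = (\<lambda>c d q. c q + d q),
      msmul = (\<lambda>s c q. s * c q),
      midem = (\<lambda>w c q. if endv tgt v q = w then c q else 0),
      marr = (\<lambda>a c q. if q \<noteq> [] \<and> last q = a \<and> pathfrom src tgt v q then c (butlast q) else 0),
      mgr = (\<lambda>i. {c. finite {q. c q \<noteq> 0} \<and> (\<forall>q. c q \<noteq> 0 \<longrightarrow> pathfrom src tgt v q)
                     \<and> (\<forall>q. length q \<noteq> i \<longrightarrow> c q = 0)}) \<rparr>"

definition coset :: "('k, 'v, 'e, 'm, 'z) qmod_scheme \<Rightarrow> 'm set \<Rightarrow> 'm \<Rightarrow> 'm set" where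
  "coset M U x = {madd M x u | u. u \<in> U}"

definition quot_mod :: "('k, 'v, 'e, 'm, 'z) qmod_scheme \<Rightarrow> 'm set \<Rightarrow> ('k, 'v, 'e, 'm set) qmod" where
  "quot_mod M U =
    (let rep = (\<lambda>X. SOME x. x \<in> X) in
    \<lparr> mcarr = coset M U ` mcarr M,
      mzero = coset M U (mzero M),
      madd = (\<lambda>X Y. coset M U (madd M (rep X) (rep Y))),
      msmul = (\<lambda>c X. coset M U (msmul M c (rep X))),
      midem = (\<lambda>w X. coset M U (midem M w (rep X))),
      marr = (\<lambda>a X. coset M U (marr M a (rep X))),
      mgr = (\<lambda>i. coset M U ` mgr M i) \<rparr>)"

definition off_cycle :: "('e \<Rightarrow> 'v) \<Rightarrow> 'e list \<Rightarrow> 'e list \<Rightarrow> bool" where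
  "off_cycle src cyc q \<longleftrightarrow> (\<exists>m i b r. i < length cyc \<and> b \<noteq> cyc ! i \<and> src b = src (cyc ! i) \<and>
       q = concat (replicate m cyc) @ take i cyc @ [b] @ r)"

definition off_submod :: "('e \<Rightarrow> 'v) \<Rightarrow> ('e \<Rightarrow> 'v) \<Rightarrow> 'v \<Rightarrow> 'e list \<Rightarrow> ('e list \<Rightarrow> 'k::field) set" where
  "off_submod src tgt v cyc =
     {c \<in> mcarr (path_mod src tgt v :: ('k, 'v, 'e, 'e list \<Rightarrow> 'k) qmod).
        \<forall>q. c q \<noteq> 0 \<longrightarrow> off_cycle src cyc q}"

text \<open>O_v = e_v kQ / \<Oplus> p^m a_1 ... a_i b kQ, for the simple cycle p = cyc at v.\<close>

definition O_mod :: "('e \<Rightarrow> 'v) \<Rightarrow> ('e \<Rightarrow> 'v) \<Rightarrow> 'v \<Rightarrow> 'e list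
    \<Rightarrow> ('k::field, 'v, 'e, ('e list \<Rightarrow> 'k) set) qmod" where
  "O_mod src tgt v cyc = quot_mod (path_mod src tgt v) (off_submod src tgt v cyc)"

end

theory Submission
  imports Defs "HOL-Real_Asymp.Real_Asymp"
begin

text \<open>
  A point module P has a basis b i of each P_i, and an arrow a acts by b i a = d_i(a) b (i + 1).
  Since P is generated in degree 0, in every degree some arrow acts nontrivially, and all such
  arrows start at the vertex w_i with b i e_(w_i) = b i, so they are the steps of walks in Q.
  Finite GK-dimension forces any two closed paths at a common vertex to commute: otherwise the
  words in two non-commuting loops would give exponentially many paths. Hence from some degree N
  on exactly one arrow \<sigma> i acts nontrivially, and \<sigma> runs periodically around a simple cycle p
  at a vertex v. After rescaling the basis so that b i \<sigma> i = b (i + 1), sending b i to the path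
  of length i along p identifies the truncation P_(\<ge>N) with O_v modulo torsion.
\<close>

lemma pathfrom_append [simp]:
  "pathfrom src tgt v (p @ q) \<longleftrightarrow> pathfrom src tgt v p \<and> pathfrom src tgt (endv tgt v p) q"
  by (induction p arbitrary: v) auto

lemma endv_append [simp]: "endv tgt v (p @ q) = endv tgt (endv tgt v p) q"
  by (induction p arbitrary: v) auto

lemma src_nth_pathfrom:
  "pathfrom src tgt v q \<Longrightarrow> j < length q \<Longrightarrow> src (q ! j) = endv tgt v (take j q)"
proof (induction q arbitrary: v j)
  case (Cons a q)
  then show ?case by (cases j) auto
qed simp

definition closed_path :: "('e \<Rightarrow> 'v) \<Rightarrow> ('e \<Rightarrow> 'v) \<Rightarrow> 'v \<Rightarrow> 'e list \<Rightarrow> bool" where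
  "closed_path src tgt v p \<longleftrightarrow> pathfrom src tgt v p \<and> endv tgt v p = v"

lemma closed_path_append:
  "closed_path src tgt u p \<Longrightarrow> closed_path src tgt u q \<Longrightarrow> closed_path src tgt u (p @ q)"
  by (simp add: closed_path_def)

lemma closed_path_concat:
  "(\<And>p. p \<in> set ps \<Longrightarrow> closed_path src tgt u p) \<Longrightarrow> closed_path src tgt u (concat ps)"
  by (induction ps) (auto simp: closed_path_def)

lemma length_filter_concat_replicate:
  "length (filter P (concat (replicate m xs))) = m * length (filter P xs)"
  by (induction m) auto

lemma commuting_words_eq:
  assumes "xs @ ys = ys @ xs" "length (filter P xs) = 1" "length (filter P ys) = 1"
  shows "xs = ys"
proof -
  obtain m n zs where "concat (replicate m zs) = xs" "concat (replicate n zs) = ys"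
    using comm_append_are_replicate[OF assms(1)] by blast
  moreover from this assms(2,3) have "m = 1" "n = 1"
    by (auto simp: length_filter_concat_replicate)
  ultimately show ?thesis by simp
qed

lemma commuting_words_length_filter:
  assumes "xs @ ys = ys @ xs" "xs \<noteq> []" "ys \<noteq> []"
  shows "length (filter P (xs @ ys)) \<noteq> 1"
proof -
  obtain n zs where "n > 1" "concat (replicate n zs) = xs @ ys"
    using comm_append_is_replicate[OF assms(2,3,1)] by blast
  then show ?thesis by (metis length_filter_concat_replicate nat_mult_eq_1_iff less_not_refl)
qed

lemma inj_on_concat_blocks:
  assumes "length A = length B" "A \<noteq> B"
  shows "inj_on (\<lambda>bs. concat (map (\<lambda>b. if b then A else B) bs)) {bs. length bs = k}"
proof (rule inj_onI)
  let ?block = "\<lambda>b. if b then A else B"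
  fix bs cs
  assume "bs \<in> {bs. length bs = k}" "cs \<in> {bs. length bs = k}"
    and eq: "concat (map ?block bs) = concat (map ?block cs)"
  moreover have "\<forall>(x, y) \<in> set (zip (map ?block bs) (map ?block cs)). length x = length y"
    using assms(1) by (auto simp: zip_map_map)
  ultimately have "map ?block bs = map ?block cs" using concat_injective by force
  moreover have "inj ?block" using assms(2) by (auto simp: inj_def)
  ultimately show "bs = cs" by (simp add: inj_map_eq_map)
qed

section \<open>Finite GK-dimension\<close>

lemma finite_paths_bounded:
  "finite {(v, p). pathfrom src tgt (v::'v::finite) (p::'e::finite list) \<and> length p \<le> n}"
proof (rule finite_subset)
  show "finite ((UNIV::'v set) \<times> {xs::'e list. set xs \<subseteq> UNIV \<and> length xs \<le> n})"
    using finite_lists_length_le[of "UNIV::'e set" n] by simp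
qed auto

lemma gk_dim_eq_infinity_if_exponential_growth:
  fixes src tgt :: "'e::finite \<Rightarrow> 'v::finite"
  assumes L: "L > 0"
    and growth: "\<And>n. 2 ^ (n div L) \<le> card {(v, p). pathfrom src tgt v p \<and> length p \<le> n}"
  shows "gk_dim src tgt = \<infinity>"
proof -
  define c where "c n = card {(v, p). pathfrom src tgt v p \<and> length p \<le> n}" for n
  define g where "g n = ln (real (c n)) / ln (real n)" for n
  define h where "h n = (real n / real L - 1) * ln 2 / ln (real n)" for n
  have "filterlim h at_top sequentially" unfolding h_def using L by real_asymp
  moreover have "\<forall>\<^sub>F n in sequentially. h n \<le> g n"
  proof (rule eventually_sequentiallyI[of 2])
    fix n :: nat assume "2 \<le> n"
    have "real (2 ^ (n div L)) \<le> real (c n)"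
      unfolding c_def by (rule of_nat_mono[OF growth])
    then have "(2::real) ^ (n div L) \<le> real (c n)" by simp
    then have "real (n div L) * ln 2 \<le> ln (real (c n))"
      by (metis ln_le_cancel_iff ln_realpow zero_less_numeral zero_less_power order_less_le_trans)
    moreover have "real n / real L - 1 \<le> real (n div L)"
    proof -
      have "real n = real L * real (n div L) + real (n mod L)"
        by (metis div_mult_mod_eq mult.commute of_nat_add of_nat_mult)
      moreover have "real (n mod L) < real L" using L by simp
      ultimately have "real n / real L < real (n div L) + 1"
        using L by (simp add: divide_less_eq algebra_simps)
      then show ?thesis by linarith
    qed
    ultimately have "(real n / real L - 1) * ln 2 \<le> ln (real (c n))"
      by (meson ln_ge_zero mult_right_mono one_le_numeral order_trans)
    then show "h n \<le> g n"
      unfolding h_def g_def using \<open>2 \<le> n\<close> by (intro divide_right_mono) auto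
  qed
  ultimately have "filterlim g at_top sequentially" by (rule filterlim_at_top_mono)
  then have "((\<lambda>n. ereal (g n)) \<longlongrightarrow> \<infinity>) sequentially" by (simp add: tendsto_PInfty_eq_at_top)
  then show ?thesis unfolding gk_dim_def g_def c_def by (intro lim_imp_Limsup) auto
qed

text \<open>If two closed paths w1, w2 at u do not commute, then w1 w2 and w2 w1 are distinct closed
  paths of the same length, and the 2^k concatenations of k of them are distinct paths.\<close>

lemma closed_paths_commute:
  fixes src tgt :: "'e::finite \<Rightarrow> 'v::finite"
  assumes gk: "gk_dim src tgt < \<infinity>"
    and w1: "closed_path src tgt u w1" and w2: "closed_path src tgt u w2"
  shows "w1 @ w2 = w2 @ w1"
proof (rule ccontr)
  assume ne: "w1 @ w2 \<noteq> w2 @ w1"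
  define L where "L = length (w1 @ w2)"
  define word where "word bs = concat (map (\<lambda>b. if b then w1 @ w2 else w2 @ w1) bs)" for bs
  have L: "L > 0" using ne unfolding L_def by auto
  have "closed_path src tgt u (word bs)" for bs
    unfolding word_def using closed_path_append[OF w1 w2] closed_path_append[OF w2 w1]
    by (intro closed_path_concat) auto
  moreover have "length (word bs) = length bs * L" for bs
    by (induction bs) (auto simp: word_def L_def)
  ultimately have paths: "(\<lambda>bs. (u, word bs)) ` {bs. length bs = n div L}
      \<subseteq> {(v, p). pathfrom src tgt v p \<and> length p \<le> n}" for n
    by (auto simp: closed_path_def times_div_less_eq_dividend)
  have "inj_on (\<lambda>bs. (u, word bs)) {bs. length bs = k}" for k
    using inj_on_concat_blocks[of "w1 @ w2" "w2 @ w1" k] ne unfolding word_def inj_on_def by auto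
  then have "card {bs::bool list. length bs = n div L}
      \<le> card {(v, p). pathfrom src tgt v p \<and> length p \<le> n}" for n
    using card_mono[OF finite_paths_bounded paths] by (simp add: card_image)
  then have "gk_dim src tgt = \<infinity>"
    using card_lists_length_eq[of "UNIV::bool set"]
    by (intro gk_dim_eq_infinity_if_exponential_growth[OF L]) simp
  with gk show False by simp
qed

text \<open>A vertex repeated on w splits it into two closed paths at that vertex; they commute, so
  their concatenation, a rotation of w, is a proper power and meets u more than once.\<close>

lemma closed_path_distinct_sources:
  fixes src tgt :: "'e::finite \<Rightarrow> 'v::finite"
  assumes gk: "gk_dim src tgt < \<infinity>" and closed: "closed_path src tgt u w"
    and once: "length (filter (\<lambda>a. src a = u) w) = 1"
  shows "distinct (map src w)"
proof (rule ccontr)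
  assume "\<not> distinct (map src w)"
  then obtain p q where pq: "p < q" "q < length w" and same: "src (w ! p) = src (w ! q)"
    by (auto simp: distinct_conv_nth) (metis linorder_neqE_nat)
  define A where "A = take p w"
  define B where "B = drop p (take q w)"
  define C where "C = drop q w"
  have "take p (take q w) = take p w" using pq by (simp add: min_def)
  then have AB: "A @ B = take q w" unfolding A_def B_def by (metis append_take_drop_id)
  have w: "w = A @ B @ C" using AB unfolding C_def by (metis append_assoc append_take_drop_id)
  have path: "pathfrom src tgt u w" and end_w: "endv tgt u w = u" using closed by (auto simp: closed_path_def)
  have end_A: "endv tgt u A = src (w ! p)" using src_nth_pathfrom[OF path] pq unfolding A_def by simp
  have end_AB: "endv tgt u (A @ B) = src (w ! p)" using src_nth_pathfrom[OF path] pq same AB by simp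
  have "closed_path src tgt (src (w ! p)) B"
    using path end_A end_AB unfolding w closed_path_def by simp
  moreover have "closed_path src tgt (src (w ! p)) (C @ A)"
    using path end_w end_A end_AB unfolding w closed_path_def by simp
  ultimately have "B @ (C @ A) = (C @ A) @ B" by (rule closed_paths_commute[OF gk])
  moreover have "B \<noteq> []" "C @ A \<noteq> []" using pq unfolding B_def C_def by auto
  moreover have "length (filter (\<lambda>a. src a = u) (B @ (C @ A))) = 1" using once unfolding w by simp
  ultimately show False using commuting_words_length_filter by blast
qed

section \<open>Eventually periodic walks\<close>

lemma eventually_recurrent:
  fixes f :: "nat \<Rightarrow> 'a::finite"
  shows "\<exists>T. \<forall>i\<ge>T. \<forall>m. \<exists>k>m. f k = f i"
proof -
  define S where "S = (\<Union>x\<in>{x. finite {k. f k = x}}. {k. f k = x})"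
  have "finite S" unfolding S_def by (intro finite_UN_I) auto
  then obtain T where T: "\<forall>k\<in>S. k < T" using finite_nat_set_iff_bounded by blast
  have "infinite {k. f k = f i}" if "T \<le> i" for i
  proof
    assume "finite {k. f k = f i}"
    then have "i \<in> S" unfolding S_def by blast
    with T that show False by auto
  qed
  then show ?thesis by (auto simp: infinite_nat_iff_unbounded)
qed

lemma map_upt_shift: "map f [a..<a + n] = map (\<lambda>j. f (a + j)) [0..<n]"
  by (induction n) auto

lemma distinct_periodic_window:
  assumes periodic: "\<And>i. T \<le> i \<Longrightarrow> f (i + n) = f i"
    and distinct: "distinct (map f [T..<T + n])" and "T \<le> s"
  shows "distinct (map f [s..<s + n])"
  using \<open>T \<le> s\<close>
proof (induction s rule: dec_induct)
  case (step k)
  show ?case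
  proof (cases n)
    case (Suc m)
    then have "[k..<k + n] = k # [Suc k..<k + n]" "[Suc k..<Suc k + n] = [Suc k..<k + n] @ [k + n]"
      by (simp_all add: upt_conv_Cons)
    then have "map f [Suc k..<Suc k + n] = rotate1 (map f [k..<k + n])"
      using periodic[OF step.hyps(1)] by simp
    then show ?thesis using step.IH by simp
  qed simp
qed (use distinct in simp)

lemma eventually_periodic_mult:
  fixes f :: "nat \<Rightarrow> 'a"
  assumes "\<And>i. T \<le> i \<Longrightarrow> f (i + n) = f i" "T \<le> i"
  shows "f (i + m * n) = f i"
proof (induction m)
  case (Suc m)
  then show ?case using assms(1)[of "i + m * n"] assms(2) by (simp add: algebra_simps)
qed simp

locale quiver_walk =
  fixes src tgt :: "'e::finite \<Rightarrow> 'v::finite" and \<beta> :: "nat \<Rightarrow> 'e"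
  assumes tgt_walk: "tgt (\<beta> i) = src (\<beta> (Suc i))"
begin

lemma walk_segment:
  "i \<le> j \<Longrightarrow> pathfrom src tgt (src (\<beta> i)) (map \<beta> [i..<j]) \<and>
    endv tgt (src (\<beta> i)) (map \<beta> [i..<j]) = src (\<beta> j)"
  by (induction j rule: dec_induct) (auto simp: tgt_walk)

lemma pathfrom_walk: "pathfrom src tgt (src (\<beta> i)) (map \<beta> [i..<j])"
  using walk_segment[of i j] by (cases "i \<le> j") auto

lemma endv_walk: "i \<le> j \<Longrightarrow> endv tgt (src (\<beta> i)) (map \<beta> [i..<j]) = src (\<beta> j)"
  using walk_segment by blast

lemma closed_path_walk:
  "i \<le> j \<Longrightarrow> src (\<beta> j) = src (\<beta> i) \<Longrightarrow> closed_path src tgt (src (\<beta> i)) (map \<beta> [i..<j])"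
  by (simp add: closed_path_def pathfrom_walk endv_walk)

lemma length_filter_first_return:
  assumes "s < s'" "\<And>k. s < k \<Longrightarrow> k < s' \<Longrightarrow> src (\<beta> k) \<noteq> src (\<beta> s)"
  shows "length (filter (\<lambda>a. src a = src (\<beta> s)) (map \<beta> [s..<s'])) = 1"
proof -
  have "filter (\<lambda>a. src a = src (\<beta> s)) (map \<beta> [Suc s..<s']) = []"
    using assms(2) by (auto simp: filter_empty_conv)
  then show ?thesis using assms(1) by (simp add: upt_conv_Cons)
qed

definition next_visit :: "nat \<Rightarrow> nat" where
  "next_visit s = (LEAST k. s < k \<and> src (\<beta> k) = src (\<beta> s))"

lemma next_visit:
  assumes "\<exists>k>s. src (\<beta> k) = src (\<beta> s)"
  shows "s < next_visit s" "src (\<beta> (next_visit s)) = src (\<beta> s)"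
    and "s < k \<Longrightarrow> k < next_visit s \<Longrightarrow> src (\<beta> k) \<noteq> src (\<beta> s)"
  using LeastI_ex[OF assms] not_less_Least[of k "\<lambda>k. s < k \<and> src (\<beta> k) = src (\<beta> s)"]
  unfolding next_visit_def by auto

text \<open>Two first-return loops at the same vertex commute, and each passes through that vertex
  only once, so they are equal.\<close>

lemma first_return_loops_eq:
  assumes gk: "gk_dim src tgt < \<infinity>" and same: "src (\<beta> t) = src (\<beta> s)"
    and returns: "\<exists>k>s. src (\<beta> k) = src (\<beta> s)" "\<exists>k>t. src (\<beta> k) = src (\<beta> t)"
  shows "map \<beta> [t..<next_visit t] = map \<beta> [s..<next_visit s]"
proof (rule commuting_words_eq)
  show "map \<beta> [t..<next_visit t] @ map \<beta> [s..<next_visit s] =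
      map \<beta> [s..<next_visit s] @ map \<beta> [t..<next_visit t]"
    using closed_path_walk[of s "next_visit s"] closed_path_walk[of t "next_visit t"]
      next_visit[OF returns(1)] next_visit[OF returns(2)] same
    by (intro closed_paths_commute[OF gk, of "src (\<beta> s)"]) auto
  show "length (filter (\<lambda>a. src a = src (\<beta> s)) (map \<beta> [s..<next_visit s])) = 1"
    using next_visit[OF returns(1)] by (intro length_filter_first_return) auto
  show "length (filter (\<lambda>a. src a = src (\<beta> s)) (map \<beta> [t..<next_visit t])) = 1"
    using next_visit[OF returns(2)] same by (intro length_filter_first_return[of t, simplified same]) auto
qed

lemma periodic_from_recurrent_vertex:
  assumes gk: "gk_dim src tgt < \<infinity>" and recurrent: "\<And>m. \<exists>k>m. src (\<beta> k) = src (\<beta> T)"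
  obtains n where "n > 0" "\<And>i. T \<le> i \<Longrightarrow> \<beta> (i + n) = \<beta> i"
    "length (filter (\<lambda>a. src a = src (\<beta> T)) (map \<beta> [T..<T + n])) = 1"
proof -
  define n where "n = next_visit T - T"
  have visit_T: "T < next_visit T" "\<And>k. T < k \<Longrightarrow> k < next_visit T \<Longrightarrow> src (\<beta> k) \<noteq> src (\<beta> T)"
    using next_visit[OF recurrent] by auto
  then have n: "n > 0" "next_visit T = T + n" unfolding n_def by auto
  have loop: "next_visit s = s + n \<and> (\<forall>j<n. \<beta> (s + j) = \<beta> (T + j))" if "src (\<beta> s) = src (\<beta> T)" for s
  proof -
    have eq: "map \<beta> [s..<next_visit s] = map \<beta> [T..<T + n]"
      using first_return_loops_eq[OF gk that] recurrent that n(2) by metis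
    have "next_visit s = s + n" using arg_cong[OF eq, of length] next_visit(1)[of s] recurrent that by force
    moreover have "\<beta> (s + j) = \<beta> (T + j)" if "j < n" for j
      using arg_cong[OF eq, of "\<lambda>xs. xs ! j"] that \<open>next_visit s = s + n\<close> by simp
    ultimately show ?thesis by simp
  qed
  have on_vertex: "src (\<beta> (T + m * n)) = src (\<beta> T)" for m
  proof (induction m)
    case (Suc m)
    then show ?case using loop[OF Suc] next_visit(2)[of "T + m * n"] recurrent
      by (simp add: algebra_simps)
  qed simp
  have "\<beta> (i + n) = \<beta> i" if "T \<le> i" for i
  proof -
    define m j where "m = (i - T) div n" and "j = (i - T) mod n"
    have i: "i = T + m * n + j" and "j < n" using that n unfolding m_def j_def by auto
    have "\<beta> (T + m * n + j) = \<beta> (T + j)" "\<beta> (T + Suc m * n + j) = \<beta> (T + j)"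
      using loop[OF on_vertex[of m]] loop[OF on_vertex[of "Suc m"]] \<open>j < n\<close> by blast+
    moreover have "i + n = T + Suc m * n + j" using i by simp
    ultimately show ?thesis using i by (simp only:)
  qed
  moreover have "length (filter (\<lambda>a. src a = src (\<beta> T)) (map \<beta> [T..<T + n])) = 1"
    using length_filter_first_return[of T "next_visit T"] visit_T n(2) by simp
  ultimately show thesis using that n(1) by blast
qed

lemma periodic_distinct_from_recurrent_vertex:
  assumes gk: "gk_dim src tgt < \<infinity>" and recurrent: "\<And>m. \<exists>k>m. src (\<beta> k) = src (\<beta> T)"
  obtains n where "n > 0" "\<And>i. T \<le> i \<Longrightarrow> \<beta> (i + n) = \<beta> i"
    "distinct (map (\<lambda>i. src (\<beta> i)) [T..<T + n])"
proof -
  obtain n where n: "n > 0" and periodic: "\<And>i. T \<le> i \<Longrightarrow> \<beta> (i + n) = \<beta> i"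
    and once: "length (filter (\<lambda>a. src a = src (\<beta> T)) (map \<beta> [T..<T + n])) = 1"
    using periodic_from_recurrent_vertex[OF gk recurrent] by blast
  have "distinct (map src (map \<beta> [T..<T + n]))"
    using closed_path_distinct_sources[OF gk closed_path_walk once] periodic[of T] by simp
  then have "distinct (map (\<lambda>i. src (\<beta> i)) [T..<T + n])" by (simp add: comp_def)
  with n periodic show thesis by (rule that)
qed

lemma unique_arrow_before_return:
  assumes gk: "gk_dim src tgt < \<infinity>" and "Suc i < k" "src (\<beta> k) = src (\<beta> i)"
    and "src a = src (\<beta> i)" "tgt a = src (\<beta> (Suc i))"
  shows "a = \<beta> i"
proof -
  have closed: "closed_path src tgt (src (\<beta> i)) (a' # map \<beta> [Suc i..<k])"
    if "src a' = src (\<beta> i)" "tgt a' = src (\<beta> (Suc i))" for a'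
    using that assms(2,3) pathfrom_walk endv_walk by (simp add: closed_path_def)
  have "(a # map \<beta> [Suc i..<k]) @ (\<beta> i # map \<beta> [Suc i..<k])
      = (\<beta> i # map \<beta> [Suc i..<k]) @ (a # map \<beta> [Suc i..<k])"
    by (rule closed_paths_commute[OF gk closed[OF assms(4,5)] closed[OF refl tgt_walk]])
  then show ?thesis by (metis append_Cons list.inject)
qed

end

locale periodic_walk = quiver_walk src tgt \<sigma> for src tgt :: "'e::finite \<Rightarrow> 'v::finite" and \<sigma> +
  fixes n :: nat
  assumes period_pos: "0 < n" and periodic: "\<sigma> (j + n) = \<sigma> j"

lemma (in quiver_walk) periodic_walk_shift:
  assumes n: "n > 0" and periodic: "\<And>i. T \<le> i \<Longrightarrow> \<beta> (i + n) = \<beta> i"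
    and distinct: "distinct (map (\<lambda>i. src (\<beta> i)) [T..<T + n])"
  shows "periodic_walk src tgt (\<lambda>j. \<beta> (T * n + j)) n"
    and "distinct (map (\<lambda>j. src (\<beta> (T * n + j))) [0..<n])"
proof -
  have "T \<le> T * n" using n by simp
  show "periodic_walk src tgt (\<lambda>j. \<beta> (T * n + j)) n"
  proof
    show "\<beta> (T * n + (j + n)) = \<beta> (T * n + j)" for j
    proof -
      have "\<beta> (T * n + j + n) = \<beta> (T * n + j)" by (rule periodic) (use \<open>T \<le> T * n\<close> in linarith)
      then show ?thesis by (simp add: add.assoc)
    qed
  qed (simp_all add: n tgt_walk)
  have periodic_src: "src (\<beta> (i + n)) = src (\<beta> i)" if "T \<le> i" for i
    using periodic[OF that] by (rule arg_cong)
  show "distinct (map (\<lambda>j. src (\<beta> (T * n + j))) [0..<n])"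
    using distinct_periodic_window[OF periodic_src distinct \<open>T \<le> T * n\<close>]
    unfolding map_upt_shift .
qed

lemma eventually_periodic_walk:
  fixes src tgt :: "'e::finite \<Rightarrow> 'v::finite" and act :: "nat \<Rightarrow> 'e \<Rightarrow> bool"
  assumes gk: "gk_dim src tgt < \<infinity>" and ex: "\<And>i. \<exists>a. act i a"
    and act_src: "\<And>i a b. act i a \<Longrightarrow> act i b \<Longrightarrow> src a = src b"
    and act_tgt: "\<And>i a b. act i a \<Longrightarrow> act (Suc i) b \<Longrightarrow> tgt a = src b"
  obtains N n \<sigma> where "periodic_walk src tgt \<sigma> n" "distinct (map (\<lambda>j. src (\<sigma> j)) [0..<n])"
    "\<And>i a. N \<le> i \<Longrightarrow> act i a \<longleftrightarrow> a = \<sigma> i"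
proof -
  define \<beta> where "\<beta> i = (SOME a. act i a)" for i
  have act_\<beta>: "act i (\<beta> i)" for i unfolding \<beta>_def using ex[of i] by (rule someI_ex)
  interpret quiver_walk src tgt \<beta> by unfold_locales (use act_tgt act_\<beta> in blast)
  obtain T where recurrent: "\<And>i m. T \<le> i \<Longrightarrow> \<exists>k>m. src (\<beta> k) = src (\<beta> i)"
    using eventually_recurrent[of "\<lambda>i. src (\<beta> i)"] by blast
  have unique: "a = \<beta> i" if "T \<le> i" "act i a" for i a
  proof -
    obtain k where k: "Suc i < k" "src (\<beta> k) = src (\<beta> i)" using recurrent[OF \<open>T \<le> i\<close>] by blast
    show ?thesis
      by (rule unique_arrow_before_return[OF gk k act_src[OF \<open>act i a\<close> act_\<beta>] act_tgt[OF \<open>act i a\<close> act_\<beta>]])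
  qed
  obtain n where n: "n > 0" and periodic: "\<And>i. T \<le> i \<Longrightarrow> \<beta> (i + n) = \<beta> i"
    and distinct: "distinct (map (\<lambda>i. src (\<beta> i)) [T..<T + n])"
    using periodic_distinct_from_recurrent_vertex[OF gk recurrent[of T]] by blast
  note shift = periodic_walk_shift[OF n periodic distinct]
  show thesis
  proof (rule that[OF shift(1,2)])
    fix i a assume "T \<le> i"
    have "\<beta> (T * n + i) = \<beta> i"
      using eventually_periodic_mult[where f = \<beta>, OF periodic \<open>T \<le> i\<close>, of T] by (simp only: add.commute)
    moreover have "act i a \<longleftrightarrow> a = \<beta> i"
      using unique[OF \<open>T \<le> i\<close>] act_\<beta>[of i] by blast
    ultimately show "act i a \<longleftrightarrow> a = \<beta> (T * n + i)" by simp
  qed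
qed

section \<open>Point modules\<close>

lemma path_act_Nil: "path_act M v [] x = midem M v x"
  by (simp add: path_act_def)

lemma path_act_snoc: "path_act M v (p @ [a]) x = marr M a (path_act M v p x)"
  by (simp add: path_act_def)

locale graded_module =
  fixes src tgt :: "'e::finite \<Rightarrow> 'v::finite" and M :: "('k::field, 'v, 'e, 'm) qmod"
  assumes grmod: "grmod src tgt M"
begin

lemma mzero_closed [simp]: "mzero M \<in> mcarr M"
  using grmod by (simp add: grmod_def)

lemma madd_closed [simp]: "x \<in> mcarr M \<Longrightarrow> y \<in> mcarr M \<Longrightarrow> madd M x y \<in> mcarr M"
  using grmod by (simp add: grmod_def)

lemma msmul_closed [simp]: "x \<in> mcarr M \<Longrightarrow> msmul M c x \<in> mcarr M"
  using grmod by (simp add: grmod_def)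

lemma madd_assoc:
  "x \<in> mcarr M \<Longrightarrow> y \<in> mcarr M \<Longrightarrow> w \<in> mcarr M \<Longrightarrow> madd M (madd M x y) w = madd M x (madd M y w)"
  using grmod unfolding grmod_def by (elim conjE) blast

lemma madd_commute: "x \<in> mcarr M \<Longrightarrow> y \<in> mcarr M \<Longrightarrow> madd M x y = madd M y x"
  using grmod by (simp add: grmod_def)

lemma mzero_madd [simp]: "x \<in> mcarr M \<Longrightarrow> madd M (mzero M) x = x"
  using grmod unfolding grmod_def by (elim conjE) blast

lemma madd_neg: "x \<in> mcarr M \<Longrightarrow> madd M x (msmul M (-1) x) = mzero M"
  using grmod by (simp add: grmod_def)

lemma msmul_madd:
  "x \<in> mcarr M \<Longrightarrow> y \<in> mcarr M \<Longrightarrow> msmul M c (madd M x y) = madd M (msmul M c x) (msmul M c y)"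
  using grmod by (simp add: grmod_def)

lemma add_msmul: "x \<in> mcarr M \<Longrightarrow> msmul M (c + d) x = madd M (msmul M c x) (msmul M d x)"
  using grmod by (simp add: grmod_def)

lemma mult_msmul: "x \<in> mcarr M \<Longrightarrow> msmul M (c * d) x = msmul M c (msmul M d x)"
  using grmod by (simp add: grmod_def)

lemma one_msmul [simp]: "x \<in> mcarr M \<Longrightarrow> msmul M 1 x = x"
  using grmod by (simp add: grmod_def)

lemma midem_closed [simp]: "x \<in> mcarr M \<Longrightarrow> midem M v x \<in> mcarr M"
  using grmod by (simp add: grmod_def)

lemma marr_closed [simp]: "x \<in> mcarr M \<Longrightarrow> marr M a x \<in> mcarr M"
  using grmod by (simp add: grmod_def)

lemma midem_madd:
  "x \<in> mcarr M \<Longrightarrow> y \<in> mcarr M \<Longrightarrow> midem M v (madd M x y) = madd M (midem M v x) (midem M v y)"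
  using grmod by (simp add: grmod_def)

lemma marr_madd:
  "x \<in> mcarr M \<Longrightarrow> y \<in> mcarr M \<Longrightarrow> marr M a (madd M x y) = madd M (marr M a x) (marr M a y)"
  using grmod by (simp add: grmod_def)

lemma midem_msmul: "x \<in> mcarr M \<Longrightarrow> midem M v (msmul M c x) = msmul M c (midem M v x)"
  using grmod by (simp add: grmod_def)

lemma marr_msmul: "x \<in> mcarr M \<Longrightarrow> marr M a (msmul M c x) = msmul M c (marr M a x)"
  using grmod by (simp add: grmod_def)

lemma midem_midem:
  "x \<in> mcarr M \<Longrightarrow> midem M v (midem M w x) = (if v = w then midem M w x else mzero M)"
  using grmod by (simp add: grmod_def)

lemma marr_midem_src: "x \<in> mcarr M \<Longrightarrow> marr M a (midem M (src a) x) = marr M a x"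
  using grmod by (simp add: grmod_def)

lemma midem_tgt_marr: "x \<in> mcarr M \<Longrightarrow> midem M (tgt a) (marr M a x) = marr M a x"
  using grmod by (simp add: grmod_def)

lemma mgr_carrier: "x \<in> mgr M i \<Longrightarrow> x \<in> mcarr M"
  using grmod by (simp add: grmod_def subset_iff)

lemma msmul_mgr: "x \<in> mgr M i \<Longrightarrow> msmul M c x \<in> mgr M i"
  using grmod by (simp add: grmod_def)

lemma midem_mgr: "x \<in> mgr M i \<Longrightarrow> midem M v x \<in> mgr M i"
  using grmod by (simp add: grmod_def)

lemma marr_mgr: "x \<in> mgr M i \<Longrightarrow> marr M a x \<in> mgr M (Suc i)"
  using grmod by (simp add: grmod_def)

lemma homogeneous_decomposition:
  "x \<in> mcarr M \<Longrightarrow> \<exists>N ms. (\<forall>i<N. ms i \<in> mgr M i) \<and> x = lsum M ms [0..<N]"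
  using grmod by (simp add: grmod_def)

lemma homogeneous_sum_eq_zero:
  "(\<forall>i<N. ms i \<in> mgr M i) \<Longrightarrow> lsum M ms [0..<N] = mzero M \<Longrightarrow> i < N \<Longrightarrow> ms i = mzero M"
  using grmod by (simp add: grmod_def)

lemma madd_mzero [simp]: "x \<in> mcarr M \<Longrightarrow> madd M x (mzero M) = x"
  using madd_commute[of x "mzero M"] by simp

lemma madd_left_cancel:
  assumes "x \<in> mcarr M" "y \<in> mcarr M" "w \<in> mcarr M" "madd M w x = madd M w y"
  shows "x = y"
proof -
  have neg: "madd M (msmul M (-1) w) w = mzero M"
    using assms(3) madd_neg[of w] madd_commute[of w "msmul M (-1) w"] by simp
  have "x = madd M (madd M (msmul M (-1) w) w) x" using assms(1) neg by simp
  also have "\<dots> = madd M (msmul M (-1) w) (madd M w y)" using assms by (simp add: madd_assoc)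
  also have "\<dots> = y" using assms(2,3) neg by (simp add: madd_assoc[symmetric])
  finally show ?thesis .
qed

lemma zero_msmul [simp]: "x \<in> mcarr M \<Longrightarrow> msmul M 0 x = mzero M"
  using add_msmul[of x 0 0] madd_left_cancel[of "msmul M 0 x" "mzero M" "msmul M 0 x"] by simp

lemma msmul_mzero [simp]: "msmul M c (mzero M) = mzero M"
  using mult_msmul[OF mzero_closed, of c 0] by simp

lemma midem_mzero [simp]: "midem M v (mzero M) = mzero M"
  using midem_msmul[OF mzero_closed, of v 0] by simp

lemma marr_mzero [simp]: "marr M a (mzero M) = mzero M"
  using marr_msmul[OF mzero_closed, of a 0] by simp

lemma msmul_eq_mzero:
  assumes "x \<in> mcarr M" "msmul M c x = mzero M" "c \<noteq> 0"
  shows "x = mzero M"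
  using mult_msmul[OF assms(1), of "inverse c" c] assms by simp

lemma msmul_right_cancel:
  assumes x: "x \<in> mcarr M" "x \<noteq> mzero M" and eq: "msmul M c x = msmul M d x"
  shows "c = d"
proof -
  have "msmul M (c - d) x = madd M (msmul M d x) (msmul M (-1) (msmul M d x))"
    using add_msmul[OF x(1), of c "- d"] eq x(1) by (simp add: mult_msmul[symmetric])
  then have "msmul M (c - d) x = mzero M" using x(1) madd_neg by simp
  then show ?thesis using msmul_eq_mzero[OF x(1)] x(2) by force
qed

lemma lsum_Nil [simp]: "lsum M f [] = mzero M"
  by (simp add: lsum_def)

lemma lsum_Cons [simp]: "lsum M f (x # xs) = madd M (f x) (lsum M f xs)"
  by (simp add: lsum_def)

lemma lsum_closed: "(\<And>x. x \<in> set xs \<Longrightarrow> f x \<in> mcarr M) \<Longrightarrow> lsum M f xs \<in> mcarr M"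
  by (induction xs) auto

lemma lsum_append:
  "(\<And>x. x \<in> set (xs @ ys) \<Longrightarrow> f x \<in> mcarr M) \<Longrightarrow>
    lsum M f (xs @ ys) = madd M (lsum M f xs) (lsum M f ys)"
  by (induction xs) (auto simp: madd_assoc lsum_closed)

lemma lsum_madd:
  assumes "\<And>x. x \<in> set xs \<Longrightarrow> f x \<in> mcarr M" "\<And>x. x \<in> set xs \<Longrightarrow> g x \<in> mcarr M"
  shows "lsum M (\<lambda>x. madd M (f x) (g x)) xs = madd M (lsum M f xs) (lsum M g xs)"
  using assms
proof (induction xs)
  case (Cons x xs)
  have "madd M (madd M (f x) (g x)) (madd M (lsum M f xs) (lsum M g xs))
      = madd M (madd M (f x) (lsum M f xs)) (madd M (g x) (lsum M g xs))"
    using Cons.prems by (metis lsum_closed list.set_intros(2) list.set_intros(1) madd_assoc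
      madd_closed madd_commute)
  then show ?case using Cons by simp
qed simp

lemma lsum_msmul:
  "(\<And>x. x \<in> set xs \<Longrightarrow> f x \<in> mcarr M) \<Longrightarrow> lsum M (\<lambda>x. msmul M c (f x)) xs = msmul M c (lsum M f xs)"
  by (induction xs) (auto simp: msmul_madd lsum_closed)

lemma marr_lsum:
  "(\<And>x. x \<in> set xs \<Longrightarrow> f x \<in> mcarr M) \<Longrightarrow> marr M a (lsum M f xs) = lsum M (\<lambda>x. marr M a (f x)) xs"
  by (induction xs) (auto simp: marr_madd lsum_closed)

lemma midem_lsum:
  "(\<And>x. x \<in> set xs \<Longrightarrow> f x \<in> mcarr M) \<Longrightarrow> midem M v (lsum M f xs) = lsum M (\<lambda>x. midem M v (f x)) xs"
  by (induction xs) (auto simp: midem_madd lsum_closed)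

lemma lsum_cong: "(\<And>x. x \<in> set xs \<Longrightarrow> f x = g x) \<Longrightarrow> lsum M f xs = lsum M g xs"
  by (induction xs) auto

lemma lsum_map: "lsum M f (map h xs) = lsum M (\<lambda>x. f (h x)) xs"
  by (induction xs) auto

lemma path_act_closed [simp]: "x \<in> mcarr M \<Longrightarrow> path_act M v p x \<in> mcarr M"
  by (induction p rule: rev_induct) (simp_all add: path_act_Nil path_act_snoc)

lemma path_act_mzero [simp]: "path_act M v p (mzero M) = mzero M"
  by (induction p rule: rev_induct) (simp_all add: path_act_Nil path_act_snoc)

end

locale point_basis = graded_module src tgt M
  for src tgt :: "'e::finite \<Rightarrow> 'v::finite" and M :: "('k::field, 'v, 'e, 'm) qmod" +
  fixes b :: "nat \<Rightarrow> 'm"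
  assumes basis_mgr: "b i \<in> mgr M i" and basis_nonzero: "b i \<noteq> mzero M"
    and basis_spans: "y \<in> mgr M i \<Longrightarrow> \<exists>c. y = msmul M c (b i)"
begin

lemma basis_closed [simp]: "b i \<in> mcarr M"
  using basis_mgr by (rule mgr_carrier)

lemma msmul_basis_eq_mzero: "msmul M c (b i) = mzero M \<Longrightarrow> c = 0"
  using msmul_eq_mzero[of "b i" c] basis_nonzero by auto

definition lincomb :: "(nat \<Rightarrow> 'k) \<Rightarrow> nat \<Rightarrow> 'm" where
  "lincomb h N = lsum M (\<lambda>i. msmul M (h i) (b i)) [0..<N]"

lemma lincomb_closed [simp]: "lincomb h N \<in> mcarr M"
  unfolding lincomb_def by (rule lsum_closed) simp

lemma lincomb_Suc: "lincomb h (Suc N) = madd M (lincomb h N) (msmul M (h N) (b N))"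
  unfolding lincomb_def by (simp add: lsum_append)

lemma lincomb_Suc_shift:
  "lincomb h (Suc N) = madd M (msmul M (h 0) (b 0)) (lsum M (\<lambda>i. msmul M (h (Suc i)) (b (Suc i))) [0..<N])"
proof -
  have "[0..<Suc N] = 0 # map Suc [0..<N]" by (simp add: upt_conv_Cons map_Suc_upt)
  then show ?thesis unfolding lincomb_def by (simp add: lsum_map)
qed

lemma lincomb_extend:
  assumes "\<And>i. N \<le> i \<Longrightarrow> h i = 0" "N \<le> N'"
  shows "lincomb h N' = lincomb h N"
  using assms(2) by (induction N' rule: dec_induct) (simp_all add: lincomb_Suc assms(1))

lemma lincomb_add: "lincomb (\<lambda>i. h i + g i) N = madd M (lincomb h N) (lincomb g N)"
  unfolding lincomb_def by (subst lsum_madd[symmetric]) (auto intro!: lsum_cong simp: add_msmul)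

lemma lincomb_scale: "lincomb (\<lambda>i. c * h i) N = msmul M c (lincomb h N)"
  unfolding lincomb_def by (subst lsum_msmul[symmetric]) (auto intro!: lsum_cong simp: mult_msmul)

lemma lincomb_zero: "lincomb (\<lambda>i. 0) N = mzero M"
  using lincomb_extend[of 0 "\<lambda>i. 0" N] by (simp add: lincomb_def)

lemma lincomb_eq_mzero: "lincomb h N = mzero M \<Longrightarrow> i < N \<Longrightarrow> h i = 0"
  using homogeneous_sum_eq_zero[of N "\<lambda>i. msmul M (h i) (b i)" i] basis_mgr msmul_mgr
  unfolding lincomb_def by (blast intro: msmul_basis_eq_mzero)

lemma lincomb_unique:
  assumes "\<And>i. N \<le> i \<Longrightarrow> h i = 0" "\<And>i. N' \<le> i \<Longrightarrow> g i = 0" "lincomb h N = lincomb g N'"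
  shows "h = g"
proof
  fix i
  define K where "K = max N N'"
  have "lincomb h K = lincomb h N" "lincomb g K = lincomb g N'"
    using assms(1,2) lincomb_extend unfolding K_def by simp_all
  then have "lincomb (\<lambda>i. h i + (-1) * g i) K = madd M (lincomb h K) (msmul M (-1) (lincomb g K))"
    by (simp only: lincomb_add lincomb_scale)
  also have "\<dots> = mzero M" using \<open>lincomb h K = lincomb h N\<close> \<open>lincomb g K = lincomb g N'\<close> assms(3)
    by (simp add: madd_neg)
  finally have "lincomb (\<lambda>i. h i + (-1) * g i) K = mzero M" .
  then have "i < K \<Longrightarrow> h i + (-1) * g i = 0" by (rule lincomb_eq_mzero)
  then show "h i = g i" using assms(1,2) unfolding K_def by (cases "i < max N N'") auto
qed

lemma lincomb_exists: "x \<in> mcarr M \<Longrightarrow> \<exists>h N. (\<forall>i\<ge>N. h i = 0) \<and> x = lincomb h N"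
proof -
  assume "x \<in> mcarr M"
  then obtain N ms where ms: "\<forall>i<N. ms i \<in> mgr M i" "x = lsum M ms [0..<N]"
    using homogeneous_decomposition by blast
  have "\<forall>i. \<exists>c. i < N \<longrightarrow> ms i = msmul M c (b i)" using ms(1) basis_spans by blast
  then obtain c where c: "\<And>i. i < N \<Longrightarrow> ms i = msmul M (c i) (b i)" by metis
  define h where "h i = (if i < N then c i else 0)" for i
  have "x = lincomb h N" unfolding lincomb_def ms(2) h_def by (rule lsum_cong) (simp add: c)
  moreover have "\<forall>i\<ge>N. h i = 0" unfolding h_def by simp
  ultimately show ?thesis by blast
qed

definition coord :: "'m \<Rightarrow> nat \<Rightarrow> 'k" where
  "coord x = (THE h. \<exists>N. (\<forall>i\<ge>N. h i = 0) \<and> x = lincomb h N)"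

lemma coord_lincomb: "(\<And>i. N \<le> i \<Longrightarrow> h i = 0) \<Longrightarrow> coord (lincomb h N) = h"
  unfolding coord_def by (rule the_equality) (use lincomb_unique in blast)+

lemma lincomb_coord: "x \<in> mcarr M \<Longrightarrow> \<exists>N. (\<forall>i\<ge>N. coord x i = 0) \<and> x = lincomb (coord x) N"
  using lincomb_exists coord_lincomb by metis

lemma coord_eventually_zero: "x \<in> mcarr M \<Longrightarrow> \<exists>N. \<forall>i\<ge>N. coord x i = 0"
  using lincomb_coord by blast

lemma coord_eq_zero_imp_mzero: "x \<in> mcarr M \<Longrightarrow> (\<And>i. coord x i = 0) \<Longrightarrow> x = mzero M"
  using lincomb_coord lincomb_zero by (metis ext)

lemma coord_madd:
  assumes "x \<in> mcarr M" "y \<in> mcarr M"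
  shows "coord (madd M x y) i = coord x i + coord y i"
proof -
  obtain N N' where N: "\<forall>i\<ge>N. coord x i = 0" "x = lincomb (coord x) N"
    and N': "\<forall>i\<ge>N'. coord y i = 0" "y = lincomb (coord y) N'"
    using lincomb_coord assms by metis
  define K where "K = max N N'"
  have "madd M x y = lincomb (\<lambda>i. coord x i + coord y i) K"
    using N N' lincomb_extend[of N "coord x" K] lincomb_extend[of N' "coord y" K]
    by (simp add: lincomb_add K_def)
  moreover have "\<forall>i\<ge>K. coord x i + coord y i = 0" using N N' K_def by simp
  ultimately show ?thesis using coord_lincomb[of K "\<lambda>i. coord x i + coord y i"] by simp
qed

lemma coord_msmul:
  assumes "x \<in> mcarr M"
  shows "coord (msmul M c x) i = c * coord x i"
proof -
  obtain N where N: "\<forall>i\<ge>N. coord x i = 0" "x = lincomb (coord x) N"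
    using lincomb_coord[OF assms] by blast
  then have "msmul M c x = lincomb (\<lambda>i. c * coord x i) N" by (simp add: lincomb_scale)
  then show ?thesis using coord_lincomb[of N "\<lambda>i. c * coord x i"] N(1) by simp
qed

lemma coord_basis: "coord (b i) j = (if j = i then 1 else 0)"
proof -
  have "lincomb (\<lambda>j. if j = i then 1 else 0) i = lincomb (\<lambda>j. 0) i"
    unfolding lincomb_def by (rule lsum_cong) simp
  then have "lincomb (\<lambda>j. if j = i then 1 else 0) (Suc i) = b i"
    by (simp add: lincomb_Suc lincomb_zero)
  then show ?thesis using coord_lincomb[of "Suc i" "\<lambda>j. if j = i then 1 else 0"] by auto
qed

lemma coord_msmul_basis: "coord (msmul M c (b i)) j = (if j = i then c else 0)"
  by (simp add: coord_msmul coord_basis)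

lemma coord_mgr: "y \<in> mgr M i \<Longrightarrow> j \<noteq> i \<Longrightarrow> coord y j = 0"
  using basis_spans coord_msmul_basis by fastforce

definition arrow_coeff :: "nat \<Rightarrow> 'e \<Rightarrow> 'k" where
  "arrow_coeff i a = (SOME c. marr M a (b i) = msmul M c (b (Suc i)))"

lemma marr_basis: "marr M a (b i) = msmul M (arrow_coeff i a) (b (Suc i))"
  unfolding arrow_coeff_def by (rule someI_ex) (use basis_spans marr_mgr basis_mgr in blast)

definition idem_coeff :: "nat \<Rightarrow> 'v \<Rightarrow> 'k" where
  "idem_coeff i w = (SOME c. midem M w (b i) = msmul M c (b i))"

lemma midem_basis: "midem M w (b i) = msmul M (idem_coeff i w) (b i)"
  unfolding idem_coeff_def by (rule someI_ex) (use basis_spans midem_mgr basis_mgr in blast)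

lemma coord_marr:
  assumes "x \<in> mcarr M"
  shows "coord (marr M a x) j = (case j of 0 \<Rightarrow> 0 | Suc i \<Rightarrow> arrow_coeff i a * coord x i)"
proof -
  obtain N where N: "\<forall>i\<ge>N. coord x i = 0" "x = lincomb (coord x) N"
    using lincomb_coord[OF assms] by blast
  define h where "h j = (case j of 0 \<Rightarrow> 0 | Suc i \<Rightarrow> arrow_coeff i a * coord x i)" for j
  have "marr M a x = lsum M (\<lambda>i. marr M a (msmul M (coord x i) (b i))) [0..<N]"
    by (subst N(2)) (simp add: lincomb_def marr_lsum)
  also have "\<dots> = lsum M (\<lambda>i. msmul M (h (Suc i)) (b (Suc i))) [0..<N]"
    by (rule lsum_cong) (simp add: h_def marr_msmul marr_basis mult_msmul[symmetric] mult.commute)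
  also have "\<dots> = lincomb h (Suc N)" by (simp add: lincomb_Suc_shift h_def lsum_closed)
  finally have "marr M a x = lincomb h (Suc N)" .
  moreover have "\<forall>i\<ge>Suc N. h i = 0" using N(1) unfolding h_def by (auto split: nat.splits)
  ultimately show ?thesis using coord_lincomb[of "Suc N" h] h_def by simp
qed

lemma coord_midem:
  assumes "x \<in> mcarr M"
  shows "coord (midem M w x) j = idem_coeff j w * coord x j"
proof -
  obtain N where N: "\<forall>i\<ge>N. coord x i = 0" "x = lincomb (coord x) N"
    using lincomb_coord[OF assms] by blast
  have "midem M w x = lsum M (\<lambda>i. midem M w (msmul M (coord x i) (b i))) [0..<N]"
    by (subst N(2)) (simp add: lincomb_def midem_lsum)
  also have "\<dots> = lincomb (\<lambda>i. idem_coeff i w * coord x i) N"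
    unfolding lincomb_def
    by (rule lsum_cong) (simp add: midem_msmul midem_basis mult_msmul[symmetric] mult.commute)
  finally show ?thesis using coord_lincomb[of N "\<lambda>i. idem_coeff i w * coord x i"] N(1) by simp
qed

lemma coord_path_act_below: "x \<in> mcarr M \<Longrightarrow> j < length p \<Longrightarrow> coord (path_act M v p x) j = 0"
proof (induction p arbitrary: j rule: rev_induct)
  case (snoc a p)
  then show ?case by (cases j) (simp_all add: path_act_snoc coord_marr)
qed simp

lemma coord_lsum:
  "(\<And>x. x \<in> set xs \<Longrightarrow> f x \<in> mcarr M) \<Longrightarrow> coord (lsum M f xs) j = (\<Sum>x\<leftarrow>xs. coord (f x) j)"
  by (induction xs) (simp_all add: coord_madd lsum_closed coord_lincomb[of 0 "\<lambda>i. 0", simplified lincomb_zero])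

lemma idem_coeff_src:
  assumes "arrow_coeff i a \<noteq> 0"
  shows "idem_coeff i w = (if w = src a then 1 else 0)"
proof -
  have "msmul M (idem_coeff i (src a) * arrow_coeff i a) (b (Suc i)) = msmul M (arrow_coeff i a) (b (Suc i))"
    using marr_midem_src[of "b i" a] by (simp add: midem_basis marr_msmul marr_basis mult_msmul)
  then have src_one: "idem_coeff i (src a) = 1"
    using msmul_right_cancel[OF basis_closed basis_nonzero] assms by force
  moreover have "idem_coeff i w = 0" if "w \<noteq> src a"
  proof -
    have "midem M w (midem M (src a) (b i)) = mzero M" using midem_midem that by simp
    then have "msmul M (idem_coeff i w) (b i) = mzero M" using src_one by (simp add: midem_basis)
    then show ?thesis by (rule msmul_basis_eq_mzero)
  qed
  ultimately show ?thesis by simp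
qed

lemma idem_coeff_tgt:
  assumes "arrow_coeff i a \<noteq> 0"
  shows "idem_coeff (Suc i) (tgt a) = 1"
proof -
  have "msmul M (arrow_coeff i a * idem_coeff (Suc i) (tgt a)) (b (Suc i)) = msmul M (arrow_coeff i a) (b (Suc i))"
    using midem_tgt_marr[of "b i" a] by (simp add: midem_basis midem_msmul marr_basis mult_msmul)
  then show ?thesis using msmul_right_cancel[OF basis_closed basis_nonzero] assms by force
qed

lemma arrow_coeff_nonzero_src:
  "arrow_coeff i a \<noteq> 0 \<Longrightarrow> arrow_coeff i a' \<noteq> 0 \<Longrightarrow> src a = src a'"
  using idem_coeff_src[of i a "src a'"] idem_coeff_src[of i a' "src a'"] by (auto split: if_splits)

lemma arrow_coeff_nonzero_tgt:
  "arrow_coeff i a \<noteq> 0 \<Longrightarrow> arrow_coeff (Suc i) a' \<noteq> 0 \<Longrightarrow> tgt a = src a'"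
  using idem_coeff_tgt[of i a] idem_coeff_src[of "Suc i" a' "tgt a"] by (auto split: if_splits)

text \<open>A point module is generated in degree 0, so b (i + 1) is reached from degree i by an arrow.\<close>

lemma arrow_coeff_nonzero_exists:
  assumes "point_module src tgt M"
  shows "\<exists>a. arrow_coeff i a \<noteq> 0"
proof (rule ccontr)
  assume "\<nexists>a. arrow_coeff i a \<noteq> 0"
  then have coord_path: "coord (path_act M v p y) (Suc i) = 0" if "y \<in> mgr M 0" for y v p
    using that coord_mgr[OF midem_mgr] mgr_carrier
    by (cases p rule: rev_exhaust) (simp_all add: path_act_Nil path_act_snoc coord_marr)
  obtain ts where ts: "\<forall>(y, v, p)\<in>set ts. y \<in> mgr M 0 \<and> pathfrom src tgt v p"
    and b: "b (Suc i) = lsum M (\<lambda>(y, v, p). path_act M v p y) ts"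
    using assms basis_closed unfolding point_module_def by blast
  have ts_mgr: "y \<in> mgr M 0" if "(y, v, p) \<in> set ts" for y v p
    using ts that by auto
  have "coord (b (Suc i)) (Suc i) = (\<Sum>t\<leftarrow>ts. coord ((\<lambda>(y, v, p). path_act M v p y) t) (Suc i))"
    unfolding b by (rule coord_lsum) (auto dest!: ts_mgr mgr_carrier)
  also have "\<dots> = (\<Sum>t\<leftarrow>ts. 0)"
    using ts by (intro arg_cong[where f = sum_list] map_cong) (auto simp: coord_path)
  finally show False by (simp add: coord_basis)
qed

definition normalized_basis :: "nat \<Rightarrow> (nat \<Rightarrow> 'e) \<Rightarrow> nat \<Rightarrow> 'm" where
  "normalized_basis N \<sigma> i = (if i < N then b i else fold (marr M) (map \<sigma> [N..<i]) (b N))"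

lemma normalized_basis_Suc:
  "N \<le> i \<Longrightarrow> normalized_basis N \<sigma> (Suc i) = marr M (\<sigma> i) (normalized_basis N \<sigma> i)"
  by (simp add: normalized_basis_def)

lemma normalized_basis_scaled:
  assumes "\<And>i. N \<le> i \<Longrightarrow> arrow_coeff i (\<sigma> i) \<noteq> 0"
  shows "\<exists>c. c \<noteq> 0 \<and> normalized_basis N \<sigma> i = msmul M c (b i)"
proof (cases "N \<le> i")
  case True
  then show ?thesis
  proof (induction i rule: dec_induct)
    case (step i)
    then obtain c where "c \<noteq> 0" "normalized_basis N \<sigma> i = msmul M c (b i)" by blast
    with assms[OF step.hyps(1)] show ?case
      by (intro exI[of _ "c * arrow_coeff i (\<sigma> i)"])
        (simp add: normalized_basis_Suc[OF step.hyps(1)] marr_msmul marr_basis mult_msmul)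
  qed (intro exI[of _ 1], simp add: normalized_basis_def)
qed (intro exI[of _ 1], simp add: normalized_basis_def)

lemma point_basis_normalized:
  assumes "\<And>i. N \<le> i \<Longrightarrow> arrow_coeff i (\<sigma> i) \<noteq> 0"
  shows "point_basis src tgt M (normalized_basis N \<sigma>)"
proof
  fix i
  obtain c where c: "c \<noteq> 0" "normalized_basis N \<sigma> i = msmul M c (b i)"
    using normalized_basis_scaled[OF assms] by blast
  show "normalized_basis N \<sigma> i \<in> mgr M i" using c basis_mgr msmul_mgr by simp
  show "normalized_basis N \<sigma> i \<noteq> mzero M" using c msmul_eq_mzero basis_closed basis_nonzero by metis
  fix y assume "y \<in> mgr M i"
  then obtain d where "y = msmul M d (b i)" using basis_spans by blast
  then have "y = msmul M (d / c) (normalized_basis N \<sigma> i)" using c by (simp add: mult_msmul[symmetric])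
  then show "\<exists>c. y = msmul M c (normalized_basis N \<sigma> i)" by blast
qed

lemma arrow_coeff_normalized:
  assumes nonzero: "\<And>i a. N \<le> i \<Longrightarrow> arrow_coeff i a \<noteq> 0 \<longleftrightarrow> a = \<sigma> i" and "N \<le> i"
  shows "point_basis.arrow_coeff M (normalized_basis N \<sigma>) i a = (if a = \<sigma> i then 1 else 0)"
proof -
  interpret normalized: point_basis src tgt M "normalized_basis N \<sigma>"
    using nonzero by (intro point_basis_normalized) blast
  show ?thesis
  proof (cases "a = \<sigma> i")
    case True
    then have "msmul M (normalized.arrow_coeff i a) (normalized_basis N \<sigma> (Suc i))
        = msmul M 1 (normalized_basis N \<sigma> (Suc i))"
      using normalized.marr_basis[of a i] normalized_basis_Suc[OF \<open>N \<le> i\<close>] by simp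
    then have "normalized.arrow_coeff i a = 1"
      by (rule msmul_right_cancel[OF normalized.basis_closed normalized.basis_nonzero])
    then show ?thesis using True by simp
  next
    case False
    then have "arrow_coeff i a = 0" using nonzero \<open>N \<le> i\<close> by blast
    moreover obtain c where "normalized_basis N \<sigma> i = msmul M c (b i)"
      using normalized_basis_scaled nonzero by blast
    ultimately have "msmul M (normalized.arrow_coeff i a) (normalized_basis N \<sigma> (Suc i)) = mzero M"
      by (simp add: normalized.marr_basis[symmetric] marr_msmul marr_basis)
    then show ?thesis using False normalized.msmul_basis_eq_mzero by simp
  qed
qed

end

lemma point_module_basis:
  assumes "point_module src tgt M"
  obtains b where "point_basis src tgt M b"
proof -
  have "\<forall>i. \<exists>x. x \<in> mgr M i \<and> x \<noteq> mzero M \<and> (\<forall>y\<in>mgr M i. \<exists>c. y = msmul M c x)"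
    using assms unfolding point_module_def by blast
  then obtain b where "\<forall>i. b i \<in> mgr M i \<and> b i \<noteq> mzero M \<and> (\<forall>y\<in>mgr M i. \<exists>c. y = msmul M c (b i))"
    by metis
  with assms have "point_basis src tgt M b"
    by unfold_locales (auto simp: point_module_def)
  then show thesis by (rule that)
qed

section \<open>The module O_v along a periodic walk\<close>

context periodic_walk
begin

definition base :: 'v where "base = src (\<sigma> 0)"

definition cycle :: "'e list" where "cycle = map \<sigma> [0..<n]"

definition \<gamma> :: "nat \<Rightarrow> 'e list" where "\<gamma> k = map \<sigma> [0..<k]"

lemma periodic_mult: "\<sigma> (j + m * n) = \<sigma> j"
  by (rule eventually_periodic_mult[where T = 0]) (simp_all add: periodic)

lemma periodic_mod: "\<sigma> j = \<sigma> (j mod n)"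
  using periodic_mult[of "j mod n" "j div n"] by simp

lemma pathfrom_\<gamma>: "pathfrom src tgt base (\<gamma> k)"
  unfolding base_def \<gamma>_def by (rule pathfrom_walk)

lemma endv_\<gamma>: "endv tgt base (\<gamma> k) = src (\<sigma> k)"
  unfolding base_def \<gamma>_def by (rule endv_walk) simp

lemma length_\<gamma> [simp]: "length (\<gamma> k) = k"
  by (simp add: \<gamma>_def)

lemma \<gamma>_Suc: "\<gamma> (Suc k) = \<gamma> k @ [\<sigma> k]"
  by (simp add: \<gamma>_def)

lemma nth_\<gamma>: "t < k \<Longrightarrow> \<gamma> k ! t = \<sigma> t"
  by (simp add: \<gamma>_def)

lemma length_cycle [simp]: "length cycle = n"
  by (simp add: cycle_def)

lemma nth_cycle: "i < n \<Longrightarrow> cycle ! i = \<sigma> i"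
  by (simp add: cycle_def)

lemma length_concat_replicate_cycle: "length (concat (replicate m cycle)) = m * n"
  by (induction m) simp_all

lemma nth_concat_replicate_cycle: "t < m * n \<Longrightarrow> concat (replicate m cycle) ! t = \<sigma> t"
proof (induction m arbitrary: t)
  case (Suc m)
  then show ?case using periodic_mult[of "t - m * n" m]
    by (cases "t < m * n")
      (auto simp: nth_append nth_cycle length_concat_replicate_cycle replicate_append_same[symmetric])
qed simp

lemma \<gamma>_mult_add:
  assumes "i \<le> n"
  shows "\<gamma> (m * n + i) = concat (replicate m cycle) @ take i cycle"
proof (rule nth_equalityI)
  fix t assume t: "t < length (\<gamma> (m * n + i))"
  show "\<gamma> (m * n + i) ! t = (concat (replicate m cycle) @ take i cycle) ! t"
  proof (cases "t < m * n")
    case False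
    then have "\<sigma> t = \<sigma> (t - m * n)" using periodic_mult[of "t - m * n" m] by simp
    with False t assms show ?thesis
      by (simp add: nth_\<gamma> nth_append nth_cycle length_concat_replicate_cycle)
  qed (use t in \<open>simp add: nth_\<gamma> nth_append length_concat_replicate_cycle nth_concat_replicate_cycle\<close>)
qed (use assms in \<open>simp add: length_concat_replicate_cycle\<close>)

lemma off_cycle_if_not_\<gamma>:
  assumes "pathfrom src tgt base q" "q \<noteq> \<gamma> (length q)"
  shows "off_cycle src cycle q"
proof -
  from assms(2) have "\<exists>j<length q. q ! j \<noteq> \<sigma> j" by (metis length_\<gamma> nth_\<gamma> nth_equalityI)
  then obtain j where j: "j < length q" "q ! j \<noteq> \<sigma> j" and before: "\<And>k. k < j \<Longrightarrow> q ! k = \<sigma> k"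
    using exists_least_iff[of "\<lambda>j. j < length q \<and> q ! j \<noteq> \<sigma> j"] by (metis less_trans)
  define m i where "m = j div n" and "i = j mod n"
  have j_eq: "j = m * n + i" and i: "i < n" using period_pos unfolding m_def i_def by simp_all
  have "take j q = \<gamma> j" using j before by (intro nth_equalityI) (auto simp: nth_\<gamma>)
  then have prefix: "take j q = concat (replicate m cycle) @ take i cycle"
    using \<gamma>_mult_add[of i m] i j_eq by simp
  have "src (q ! j) = src (\<sigma> j)" using src_nth_pathfrom[OF assms(1) j(1)] \<open>take j q = \<gamma> j\<close> endv_\<gamma> by simp
  moreover have "\<sigma> j = cycle ! i" using periodic_mod nth_cycle[OF i] unfolding i_def by simp
  moreover have "q = concat (replicate m cycle) @ take i cycle @ [q ! j] @ drop (Suc j) q"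
    using id_take_nth_drop[OF j(1)] prefix by simp
  ultimately show ?thesis
    unfolding off_cycle_def using i j(2) by (intro exI[of _ m] exI[of _ i] exI[of _ "q ! j"]) auto
qed

lemma \<gamma>_not_off_cycle: "\<not> off_cycle src cycle (\<gamma> k)"
proof
  assume "off_cycle src cycle (\<gamma> k)"
  then obtain m i a r where i: "i < n" and a: "a \<noteq> cycle ! i"
    and eq: "\<gamma> k = concat (replicate m cycle) @ take i cycle @ [a] @ r"
    unfolding off_cycle_def by auto
  have "\<gamma> k = \<gamma> (m * n + i) @ a # r" using eq \<gamma>_mult_add[of i m] i by simp
  then have "\<gamma> k ! (m * n + i) = a" by (metis length_\<gamma> nth_append_length)
  moreover have "m * n + i < k" using arg_cong[OF \<open>\<gamma> k = \<gamma> (m * n + i) @ a # r\<close>, of length] by simp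
  ultimately have "a = \<sigma> (i + m * n)" using nth_\<gamma> by (simp add: add.commute)
  then show False using a periodic_mult nth_cycle[OF i] by simp
qed

lemma simple_cycle:
  "distinct (map (\<lambda>j. src (\<sigma> j)) [0..<n]) \<Longrightarrow> simple_cycle src tgt base cycle"
  using period_pos pathfrom_\<gamma>[of n] endv_\<gamma>[of n] periodic[of 0]
  by (simp add: simple_cycle_def cycle_def \<gamma>_def base_def comp_def)

abbreviation evkQ :: "('k::field, 'v, 'e, 'e list \<Rightarrow> 'k) qmod" where
  "evkQ \<equiv> path_mod src tgt base"

abbreviation Ov :: "('k::field, 'v, 'e, ('e list \<Rightarrow> 'k) set) qmod" where
  "Ov \<equiv> O_mod src tgt base cycle"

abbreviation cls :: "('e list \<Rightarrow> 'k::field) \<Rightarrow> ('e list \<Rightarrow> 'k) set" where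
  "cls c \<equiv> coset evkQ (off_submod src tgt base cycle) c"

lemma mem_evkQ_carrier:
  "c \<in> mcarr evkQ \<longleftrightarrow> finite {q. c q \<noteq> 0} \<and> (\<forall>q. c q \<noteq> 0 \<longrightarrow> pathfrom src tgt base q)"
  by (simp add: path_mod_def)

lemma evkQ_simps:
  "mzero evkQ = (\<lambda>q. 0)" "madd evkQ c d = (\<lambda>q. c q + d q)" "msmul evkQ s c = (\<lambda>q. s * c q)"
  "midem evkQ w c = (\<lambda>q. if endv tgt base q = w then c q else 0)"
  "marr evkQ a c = (\<lambda>q. if q \<noteq> [] \<and> last q = a \<and> pathfrom src tgt base q then c (butlast q) else 0)"
  by (simp_all add: path_mod_def)

lemma evkQ_mgr: "mgr evkQ i = {c \<in> mcarr evkQ. \<forall>q. length q \<noteq> i \<longrightarrow> c q = 0}"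
  by (simp add: path_mod_def)

lemma zero_in_evkQ [simp]: "(\<lambda>q. 0) \<in> mcarr evkQ"
  by (simp add: mem_evkQ_carrier)

lemma add_in_evkQ [simp]:
  assumes "c \<in> mcarr evkQ" "d \<in> mcarr evkQ"
  shows "(\<lambda>q. c q + d q) \<in> mcarr evkQ"
proof -
  have "{q. c q + d q \<noteq> 0} \<subseteq> {q. c q \<noteq> 0} \<union> {q. d q \<noteq> 0}" by auto
  then have "finite {q. c q + d q \<noteq> 0}"
    using assms unfolding mem_evkQ_carrier by (meson finite_UnI finite_subset)
  then show ?thesis using assms unfolding mem_evkQ_carrier by (metis add.right_neutral add_0)
qed

lemma evkQ_carrier_support_subset:
  "c \<in> mcarr evkQ \<Longrightarrow> (\<And>q. d q \<noteq> 0 \<Longrightarrow> c q \<noteq> 0) \<Longrightarrow> d \<in> mcarr evkQ"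
  unfolding mem_evkQ_carrier by (metis (mono_tags, lifting) finite_subset mem_Collect_eq subsetI)

lemma scale_in_evkQ [simp]: "c \<in> mcarr evkQ \<Longrightarrow> (\<lambda>q. s * c q) \<in> mcarr evkQ"
  by (erule evkQ_carrier_support_subset) simp

lemma diff_in_evkQ [simp]:
  assumes "c \<in> mcarr evkQ" "d \<in> mcarr evkQ"
  shows "(\<lambda>q. c q - d q) \<in> mcarr evkQ"
proof -
  have "(\<lambda>q. c q + (-1) * d q) \<in> mcarr evkQ" by (rule add_in_evkQ[OF assms(1) scale_in_evkQ[OF assms(2)]])
  then show ?thesis by simp
qed

lemma midem_in_evkQ [simp]: "c \<in> mcarr evkQ \<Longrightarrow> midem evkQ w c \<in> mcarr evkQ"
  by (erule evkQ_carrier_support_subset) (simp add: evkQ_simps split: if_splits)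

lemma marr_in_evkQ [simp]: "c \<in> mcarr evkQ \<Longrightarrow> marr evkQ a c \<in> mcarr evkQ"
proof -
  assume c: "c \<in> mcarr evkQ"
  have "{q. marr evkQ a c q \<noteq> 0} \<subseteq> (\<lambda>p. p @ [a]) ` {q. c q \<noteq> 0}"
  proof
    fix q assume "q \<in> {q. marr evkQ a c q \<noteq> 0}"
    then have "q \<noteq> []" "last q = a" "c (butlast q) \<noteq> 0" by (auto simp: evkQ_simps split: if_splits)
    then have "q = butlast q @ [a]" "butlast q \<in> {q. c q \<noteq> 0}" by auto
    then show "q \<in> (\<lambda>p. p @ [a]) ` {q. c q \<noteq> 0}" by (rule image_eqI)
  qed
  moreover have "finite ((\<lambda>p. p @ [a]) ` {q. c q \<noteq> 0})" using c by (simp add: mem_evkQ_carrier)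
  ultimately have "finite {q. marr evkQ a c q \<noteq> 0}" by (rule finite_subset)
  then show ?thesis unfolding mem_evkQ_carrier by (simp add: evkQ_simps)
qed

lemma path_act_in_evkQ [simp]: "c \<in> mcarr evkQ \<Longrightarrow> path_act evkQ w p c \<in> mcarr evkQ"
  by (induction p rule: rev_induct) (simp_all add: path_act_Nil path_act_snoc)

lemma evkQ_path_act_zero: "path_act evkQ w p (\<lambda>q. 0) = (\<lambda>q. 0)"
  by (induction p rule: rev_induct) (simp_all add: path_act_Nil path_act_snoc evkQ_simps)

lemma evkQ_marr_\<gamma>: "marr evkQ a c (\<gamma> j) = (case j of 0 \<Rightarrow> 0 | Suc i \<Rightarrow> if \<sigma> i = a then c (\<gamma> i) else 0)"
  using pathfrom_\<gamma>[of j] by (cases j) (simp_all add: evkQ_simps \<gamma>_Suc, simp add: \<gamma>_def)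

lemma evkQ_midem_\<gamma>: "midem evkQ w c (\<gamma> j) = (if src (\<sigma> j) = w then c (\<gamma> j) else 0)"
  by (simp add: evkQ_simps endv_\<gamma>)

lemma evkQ_path_act_support: "path_act evkQ w p c q \<noteq> 0 \<Longrightarrow> length p \<le> length q"
proof (induction p arbitrary: q rule: rev_induct)
  case (snoc a p)
  then have "q \<noteq> []" "path_act evkQ w p c (butlast q) \<noteq> 0"
    by (auto simp: path_act_snoc evkQ_simps split: if_splits)
  then show ?case using snoc.IH[of "butlast q"] by (cases q rule: rev_cases) auto
qed simp

lemma evkQ_path_act_walk: "path_act evkQ (src (\<sigma> j)) (map \<sigma> [j..<j + m]) c (\<gamma> (j + m)) = c (\<gamma> j)"
proof (induction m)
  case (Suc m)
  have "map \<sigma> [j..<j + Suc m] = map \<sigma> [j..<j + m] @ [\<sigma> (j + m)]" by simp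
  then show ?case using Suc by (simp add: path_act_snoc evkQ_marr_\<gamma>)
qed (simp add: path_act_Nil evkQ_midem_\<gamma>)

lemma mem_off_submod_iff: "c \<in> off_submod src tgt base cycle \<longleftrightarrow> c \<in> mcarr evkQ \<and> (\<forall>j. c (\<gamma> j) = 0)"
proof
  assume "c \<in> off_submod src tgt base cycle"
  then show "c \<in> mcarr evkQ \<and> (\<forall>j. c (\<gamma> j) = 0)"
    using \<gamma>_not_off_cycle unfolding off_submod_def by blast
next
  assume c: "c \<in> mcarr evkQ \<and> (\<forall>j. c (\<gamma> j) = 0)"
  then have "off_cycle src cycle q" if "c q \<noteq> 0" for q
    using off_cycle_if_not_\<gamma>[of q] that unfolding mem_evkQ_carrier by metis
  then show "c \<in> off_submod src tgt base cycle" using c unfolding off_submod_def by blast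
qed

lemma mem_cls_iff:
  assumes "c \<in> mcarr evkQ"
  shows "x \<in> cls c \<longleftrightarrow> x \<in> mcarr evkQ \<and> (\<forall>j. x (\<gamma> j) = c (\<gamma> j))"
proof
  assume "x \<in> cls c"
  then obtain u where "u \<in> off_submod src tgt base cycle" "x = (\<lambda>q. c q + u q)"
    unfolding coset_def evkQ_simps by auto
  then show "x \<in> mcarr evkQ \<and> (\<forall>j. x (\<gamma> j) = c (\<gamma> j))"
    using assms by (simp add: mem_off_submod_iff)
next
  assume x: "x \<in> mcarr evkQ \<and> (\<forall>j. x (\<gamma> j) = c (\<gamma> j))"
  then have "(\<lambda>q. x q - c q) \<in> off_submod src tgt base cycle"
    using assms by (simp add: mem_off_submod_iff)
  then have "\<exists>u. x = (\<lambda>q. c q + u q) \<and> u \<in> off_submod src tgt base cycle"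
    by (intro exI[of _ "\<lambda>q. x q - c q"]) simp
  then show "x \<in> cls c" unfolding coset_def evkQ_simps by blast
qed

lemma cls_eq_iff:
  assumes "c \<in> mcarr evkQ" "d \<in> mcarr evkQ"
  shows "cls c = cls d \<longleftrightarrow> (\<forall>j. c (\<gamma> j) = d (\<gamma> j))"
  using mem_cls_iff[OF assms(1)] mem_cls_iff[OF assms(2)] assms by auto

lemma some_mem_cls:
  assumes "c \<in> mcarr evkQ"
  shows "(SOME x. x \<in> cls c) \<in> mcarr evkQ" "(SOME x. x \<in> cls c) (\<gamma> j) = c (\<gamma> j)"
proof -
  have "c \<in> cls c" using mem_cls_iff[OF assms] assms by simp
  then have "(SOME x. x \<in> cls c) \<in> cls c" by (rule someI[where P = "\<lambda>x. x \<in> cls c"])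
  then show "(SOME x. x \<in> cls c) \<in> mcarr evkQ" "(SOME x. x \<in> cls c) (\<gamma> j) = c (\<gamma> j)"
    using mem_cls_iff[OF assms] by simp_all
qed

lemma Ov_carrier: "mcarr Ov = cls ` mcarr evkQ"
  by (simp add: O_mod_def quot_mod_def)

lemma Ov_mzero: "mzero Ov = cls (\<lambda>q. 0)"
  by (simp add: O_mod_def quot_mod_def evkQ_simps)

lemma Ov_mgr: "mgr Ov i = cls ` mgr evkQ i"
  by (simp add: O_mod_def quot_mod_def)

lemma Ov_madd:
  "c \<in> mcarr evkQ \<Longrightarrow> d \<in> mcarr evkQ \<Longrightarrow> madd Ov (cls c) (cls d) = cls (\<lambda>q. c q + d q)"
  by (simp add: O_mod_def quot_mod_def evkQ_simps cls_eq_iff some_mem_cls)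

lemma Ov_msmul: "c \<in> mcarr evkQ \<Longrightarrow> msmul Ov s (cls c) = cls (\<lambda>q. s * c q)"
  by (simp add: O_mod_def quot_mod_def evkQ_simps cls_eq_iff some_mem_cls)

lemma Ov_midem: "c \<in> mcarr evkQ \<Longrightarrow> midem Ov w (cls c) = cls (midem evkQ w c)"
  by (simp add: O_mod_def quot_mod_def cls_eq_iff some_mem_cls evkQ_midem_\<gamma>)

lemma Ov_marr: "c \<in> mcarr evkQ \<Longrightarrow> marr Ov a (cls c) = cls (marr evkQ a c)"
  by (simp add: O_mod_def quot_mod_def cls_eq_iff some_mem_cls evkQ_marr_\<gamma> split: nat.splits)

lemma Ov_path_act: "c \<in> mcarr evkQ \<Longrightarrow> path_act Ov w p (cls c) = cls (path_act evkQ w p c)"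
  by (induction p rule: rev_induct) (simp_all add: path_act_Nil path_act_snoc Ov_midem Ov_marr)

lemma msub_Ov_torsion:
  assumes "c \<in> mcarr evkQ" "d \<in> mcarr evkQ" "\<And>j. c (\<gamma> j) = d (\<gamma> j)"
  shows "msub Ov (cls c) (cls d) \<in> tors src tgt Ov"
proof -
  have "msub Ov (cls c) (cls d) = madd Ov (cls c) (cls (\<lambda>q. (-1) * d q))"
    unfolding msub_def using assms(2) by (simp only: Ov_msmul)
  also have "\<dots> = cls (\<lambda>q. c q + (-1) * d q)"
    using assms(1,2) by (intro Ov_madd scale_in_evkQ)
  also have "\<dots> = cls (\<lambda>q. 0)" using assms by (simp add: cls_eq_iff)
  finally show ?thesis
    by (simp add: tors_def ann_ge_def Ov_carrier Ov_mzero Ov_path_act evkQ_path_act_zero)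
qed

definition along :: "(nat \<Rightarrow> 'k::field) \<Rightarrow> 'e list \<Rightarrow> 'k" where
  "along h q = (if q = \<gamma> (length q) then h (length q) else 0)"

lemma along_\<gamma> [simp]: "along h (\<gamma> j) = h j"
  by (simp add: along_def)

lemma along_in_evkQ: "(\<And>i. N \<le> i \<Longrightarrow> h i = 0) \<Longrightarrow> along h \<in> mcarr evkQ"
proof -
  assume h: "\<And>i. N \<le> i \<Longrightarrow> h i = 0"
  have "{q. along h q \<noteq> 0} \<subseteq> \<gamma> ` {..<N}"
    using h by (auto simp: along_def split: if_splits) (metis lessThan_iff not_le image_eqI)
  then have "finite {q. along h q \<noteq> 0}" by (rule finite_subset) simp
  moreover have "pathfrom src tgt base q" if "along h q \<noteq> 0" for q
    using that pathfrom_\<gamma> by (metis along_def)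
  ultimately show ?thesis unfolding mem_evkQ_carrier by blast
qed

lemma along_mgr:
  "(\<And>i. N \<le> i \<Longrightarrow> h i = 0) \<Longrightarrow> (\<And>j. j \<noteq> k \<Longrightarrow> h j = 0) \<Longrightarrow> along h \<in> mgr evkQ k"
  using along_in_evkQ unfolding evkQ_mgr by (auto simp: along_def)

lemma eventually_zero_on_\<gamma>: "c \<in> mcarr evkQ \<Longrightarrow> \<exists>N. \<forall>j\<ge>N. c (\<gamma> j) = 0"
proof -
  assume "c \<in> mcarr evkQ"
  then have "finite (length ` {q. c q \<noteq> 0})" by (simp add: mem_evkQ_carrier)
  then obtain N where N: "\<forall>l\<in>length ` {q. c q \<noteq> 0}. l < N"
    using finite_nat_set_iff_bounded by blast
  have "c (\<gamma> j) = 0" if "N \<le> j" for j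
  proof (rule ccontr)
    assume "c (\<gamma> j) \<noteq> 0"
    then have "length (\<gamma> j) \<in> length ` {q. c q \<noteq> 0}" by blast
    with N that show False by fastforce
  qed
  then show ?thesis by blast
qed

end

section \<open>The isomorphism with O_v\<close>

locale normalized_point_basis = point_basis src tgt M b + periodic_walk src tgt \<sigma> n
  for src tgt :: "'e::finite \<Rightarrow> 'v::finite" and M :: "('k::field, 'v, 'e, 'm) qmod" and b \<sigma> n +
  fixes N :: nat
  assumes arrow_coeff_walk: "N \<le> i \<Longrightarrow> arrow_coeff i a = (if a = \<sigma> i then 1 else 0)"
begin

lemma idem_coeff_walk: "N \<le> i \<Longrightarrow> idem_coeff i w = (if w = src (\<sigma> i) then 1 else 0)"
  using idem_coeff_src[of i "\<sigma> i" w] arrow_coeff_walk by simp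

definition truncation :: "'m set" where
  "truncation = {x \<in> mcarr M. \<forall>i<N. coord x i = 0}"

definition to_Ov :: "'m \<Rightarrow> ('e list \<Rightarrow> 'k) set" where
  "to_Ov x = cls (along (coord x))"

lemma truncation_closed: "x \<in> truncation \<Longrightarrow> x \<in> mcarr M"
  by (simp add: truncation_def)

lemma coord_truncation: "x \<in> truncation \<Longrightarrow> i < N \<Longrightarrow> coord x i = 0"
  by (simp add: truncation_def)

lemma along_coord_in_evkQ: "x \<in> mcarr M \<Longrightarrow> along (coord x) \<in> mcarr evkQ"
  using coord_eventually_zero along_in_evkQ by metis

lemma gr_submod_truncation: "gr_submod M truncation"
  unfolding gr_submod_def
proof (intro conjI ballI allI)
  show "truncation \<subseteq> mcarr M" "mzero M \<in> truncation"
    using coord_lincomb[of 0 "\<lambda>i. 0"] by (auto simp: truncation_def lincomb_zero)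
  fix x assume x: "x \<in> truncation"
  note [simp] = truncation_closed[OF x] coord_truncation[OF x]
  show "madd M x y \<in> truncation" if "y \<in> truncation" for y
    using that by (simp add: truncation_def coord_madd)
  show "msmul M c x \<in> truncation" for c
    by (simp add: truncation_def coord_msmul)
  show "midem M v x \<in> truncation" for v
    by (simp add: truncation_def coord_midem)
  show "marr M a x \<in> truncation" for a
    by (auto simp: truncation_def coord_marr split: nat.splits)
  obtain K where K: "x = lincomb (coord x) K" using lincomb_coord[OF truncation_closed[OF x]] by blast
  have "msmul M (coord x i) (b i) \<in> mgr M i \<inter> truncation" for i
    using basis_mgr msmul_mgr by (simp add: truncation_def coord_msmul_basis mgr_carrier)
  then show "\<exists>K ms. (\<forall>i<K. ms i \<in> mgr M i \<inter> truncation) \<and> x = lsum M ms [0..<K]"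
    using K unfolding lincomb_def
    by (intro exI[of _ K] exI[of _ "\<lambda>i. msmul M (coord x i) (b i)"]) blast
qed

lemma quot_torsion_truncation: "quot_torsion src tgt M truncation"
  unfolding quot_torsion_def
proof (intro ballI exI allI impI)
  fix x v p assume "x \<in> mcarr M" "pathfrom src tgt v p \<and> N \<le> length p"
  then show "path_act M v p x \<in> truncation" by (simp add: truncation_def coord_path_act_below)
qed

lemma to_Ov_closed: "x \<in> mcarr M \<Longrightarrow> to_Ov x \<in> mcarr Ov"
  by (simp add: to_Ov_def Ov_carrier along_coord_in_evkQ)

lemma to_Ov_madd:
  assumes "x \<in> mcarr M" "y \<in> mcarr M"
  shows "msub Ov (to_Ov (madd M x y)) (madd Ov (to_Ov x) (to_Ov y)) \<in> tors src tgt Ov"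
  unfolding to_Ov_def using assms
  by (simp add: Ov_madd along_coord_in_evkQ msub_Ov_torsion coord_madd)

lemma to_Ov_msmul:
  "x \<in> mcarr M \<Longrightarrow> msub Ov (to_Ov (msmul M c x)) (msmul Ov c (to_Ov x)) \<in> tors src tgt Ov"
  unfolding to_Ov_def by (simp add: Ov_msmul along_coord_in_evkQ msub_Ov_torsion coord_msmul)

lemma to_Ov_midem:
  assumes "x \<in> truncation"
  shows "msub Ov (to_Ov (midem M w x)) (midem Ov w (to_Ov x)) \<in> tors src tgt Ov"
proof -
  have "along (coord (midem M w x)) (\<gamma> j) = midem evkQ w (along (coord x)) (\<gamma> j)" for j
    using assms by (cases "j < N") (simp_all add: truncation_def coord_midem evkQ_midem_\<gamma> idem_coeff_walk)
  then show ?thesis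
    unfolding to_Ov_def using truncation_closed[OF assms]
    by (simp add: Ov_midem along_coord_in_evkQ msub_Ov_torsion)
qed

lemma to_Ov_marr:
  assumes "x \<in> truncation"
  shows "msub Ov (to_Ov (marr M a x)) (marr Ov a (to_Ov x)) \<in> tors src tgt Ov"
proof -
  have "along (coord (marr M a x)) (\<gamma> j) = marr evkQ a (along (coord x)) (\<gamma> j)" for j
    using assms
    by (cases j; cases "j - 1 < N") (auto simp: truncation_def coord_marr evkQ_marr_\<gamma> arrow_coeff_walk)
  then show ?thesis
    unfolding to_Ov_def using truncation_closed[OF assms]
    by (simp add: Ov_marr along_coord_in_evkQ msub_Ov_torsion)
qed

lemma to_Ov_mgr: "x \<in> mgr M i \<Longrightarrow> to_Ov x \<in> mgr Ov i"
  unfolding to_Ov_def Ov_mgr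
  by (metis along_mgr coord_eventually_zero coord_mgr image_eqI mgr_carrier)

text \<open>A nonzero coordinate in degree j survives along the walk: the path of length m starting at
  \<sigma> j carries the coefficient of \<gamma> j to \<gamma> (j + m), so to_Ov x is torsion only for x = 0.\<close>

lemma to_Ov_reflects_torsion:
  assumes x: "x \<in> mcarr M" and tors: "to_Ov x \<in> tors src tgt Ov"
  shows "x \<in> tors src tgt M"
proof -
  obtain m where m: "ann_ge src tgt Ov m (to_Ov x)" using tors unfolding tors_def by blast
  have "coord x j = 0" for j
  proof -
    define c where "c = path_act evkQ (src (\<sigma> j)) (map \<sigma> [j..<j + m]) (along (coord x))"
    have c_in: "c \<in> mcarr evkQ" using along_coord_in_evkQ[OF x] by (simp add: c_def)
    have "path_act Ov (src (\<sigma> j)) (map \<sigma> [j..<j + m]) (to_Ov x) = mzero Ov"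
      using m pathfrom_walk unfolding ann_ge_def by simp
    moreover have "path_act Ov (src (\<sigma> j)) (map \<sigma> [j..<j + m]) (to_Ov x) = cls c"
      unfolding to_Ov_def c_def by (rule Ov_path_act[OF along_coord_in_evkQ[OF x]])
    ultimately have "cls c = cls (\<lambda>q. 0)" by (simp add: Ov_mzero)
    then have "c (\<gamma> (j + m)) = 0" using cls_eq_iff[OF c_in zero_in_evkQ] by simp
    then show ?thesis by (simp add: c_def evkQ_path_act_walk)
  qed
  then have "x = mzero M" by (rule coord_eq_zero_imp_mzero[OF x])
  then show ?thesis by (simp add: tors_def ann_ge_def)
qed

lemma to_Ov_surjective_mod_torsion:
  assumes "y \<in> mcarr Ov" "pathfrom src tgt v p" "N \<le> length p"
  shows "\<exists>x\<in>truncation. msub Ov (path_act Ov v p y) (to_Ov x) \<in> tors src tgt Ov"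
proof -
  obtain c where c: "c \<in> mcarr evkQ" "y = cls c" using assms(1) Ov_carrier by auto
  define d where "d = path_act evkQ v p c"
  have d: "d \<in> mcarr evkQ" unfolding d_def using c(1) by simp
  obtain K where K: "\<forall>j\<ge>K. d (\<gamma> j) = 0" using eventually_zero_on_\<gamma>[OF d] by blast
  define x where "x = lincomb (\<lambda>j. d (\<gamma> j)) K"
  have coord_x: "coord x = (\<lambda>j. d (\<gamma> j))" unfolding x_def by (rule coord_lincomb) (use K in auto)
  have "d (\<gamma> j) = 0" if "j < length p" for j
    using evkQ_path_act_support[of v p c "\<gamma> j"] that unfolding d_def by force
  then have "x \<in> truncation" using assms(3) coord_x by (simp add: truncation_def x_def)
  moreover have "msub Ov (cls d) (to_Ov x) \<in> tors src tgt Ov"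
    unfolding to_Ov_def coord_x using d K by (intro msub_Ov_torsion along_in_evkQ[of K]) auto
  moreover have "path_act Ov v p y = cls d" unfolding c(2) d_def by (rule Ov_path_act[OF c(1)])
  ultimately show ?thesis by auto
qed

lemma qgr_iso_Ov: "qgr_iso src tgt M Ov"
  unfolding qgr_iso_def
proof (intro exI conjI)
  show "gr_submod M truncation" by (rule gr_submod_truncation)
  show "quot_torsion src tgt M truncation" by (rule quot_torsion_truncation)
  show "\<forall>x\<in>truncation. to_Ov x \<in> mcarr Ov" using to_Ov_closed truncation_closed by blast
  show "\<forall>x\<in>truncation. \<forall>y\<in>truncation. msub Ov (to_Ov (madd M x y)) (madd Ov (to_Ov x) (to_Ov y)) \<in> tors src tgt Ov"
    using to_Ov_madd truncation_closed by blast
  show "\<forall>c. \<forall>x\<in>truncation. msub Ov (to_Ov (msmul M c x)) (msmul Ov c (to_Ov x)) \<in> tors src tgt Ov"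
    using to_Ov_msmul truncation_closed by blast
  show "\<forall>v. \<forall>x\<in>truncation. msub Ov (to_Ov (midem M v x)) (midem Ov v (to_Ov x)) \<in> tors src tgt Ov"
    using to_Ov_midem by blast
  show "\<forall>a. \<forall>x\<in>truncation. msub Ov (to_Ov (marr M a x)) (marr Ov a (to_Ov x)) \<in> tors src tgt Ov"
    using to_Ov_marr by blast
  show "\<forall>i. \<forall>x\<in>truncation \<inter> mgr M i. \<exists>y\<in>mgr Ov i. msub Ov (to_Ov x) y \<in> tors src tgt Ov"
    using to_Ov_mgr msub_Ov_torsion along_coord_in_evkQ mgr_carrier unfolding to_Ov_def by blast
  show "\<forall>x\<in>truncation. to_Ov x \<in> tors src tgt Ov \<longrightarrow> x \<in> tors src tgt M"
    using to_Ov_reflects_torsion truncation_closed by blast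
  show "\<forall>y\<in>mcarr Ov. \<exists>m. \<forall>v p. pathfrom src tgt v p \<and> m \<le> length p \<longrightarrow>
      (\<exists>x\<in>truncation. msub Ov (path_act Ov v p y) (to_Ov x) \<in> tors src tgt Ov)"
    using to_Ov_surjective_mod_torsion by blast
qed

end

theorem proposition5p5:
  fixes src tgt :: "'e::finite \<Rightarrow> 'v::finite"
    and P :: "('k::field, 'v, 'e, 'm) qmod"
  assumes "gk_dim src tgt < \<infinity>"
    and "point_module src tgt P"
  shows "\<exists>v cyc. simple_cycle src tgt v cyc \<and>
           qgr_iso src tgt P (O_mod src tgt v cyc :: ('k, 'v, 'e, ('e list \<Rightarrow> 'k) set) qmod)"
proof -
  obtain b where "point_basis src tgt P b" using point_module_basis[OF assms(2)] .
  then interpret point_basis src tgt P b .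
  obtain N n \<sigma> where walk: "periodic_walk src tgt \<sigma> n"
    and distinct: "distinct (map (\<lambda>j. src (\<sigma> j)) [0..<n])"
    and nonzero: "\<And>i a. N \<le> i \<Longrightarrow> arrow_coeff i a \<noteq> 0 \<longleftrightarrow> a = \<sigma> i"
  proof (rule eventually_periodic_walk[OF assms(1), where act = "\<lambda>i a. arrow_coeff i a \<noteq> 0"])
    show "\<exists>a. arrow_coeff i a \<noteq> 0" for i by (rule arrow_coeff_nonzero_exists[OF assms(2)])
  qed (use arrow_coeff_nonzero_src arrow_coeff_nonzero_tgt that in blast)+
  have "point_basis src tgt P (normalized_basis N \<sigma>)"
    using nonzero by (intro point_basis_normalized) blast
  with walk arrow_coeff_normalized[OF nonzero]
  interpret normalized: normalized_point_basis src tgt P "normalized_basis N \<sigma>" \<sigma> n N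
    by (simp add: normalized_point_basis_def normalized_point_basis_axioms_def)
  show ?thesis using normalized.simple_cycle[OF distinct] normalized.qgr_iso_Ov by blast
qed

end
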